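(* Let $Z=Z_\Sigma$ be a projective toric surface over an algebraically closed field of characteristic zero, given by a complete fan $\Sigma$ in $\mathbb{Z}^2$. Then \[ [\operatorname{Cl}(Z):\operatorname{Pic}(Z)]=\frac{1}{|\operatorname{Cl}(Z)^{\mathrm{tors}}|}\prod_{\sigma\in\Sigma_{\max}}|\operatorname{Cl}(Z,z_\sigma)|, \] where $z_\sigma$ is the torus fixed point corresponding to the maximal cone $\sigma$.
   Context: $\operatorname{Cl}(Z,z)$ denotes the local class group: Weil divisors on $Z$ modulo those principal on some neighbourhood of $z$. $\operatorname{Cl}(Z)^{\mathrm{tors}}$ is the torsion subgroup of the divisor class group, and $\operatorname{Pic}(Z)\subseteq\operatorname{Cl}(Z)$ the subgroup of Cartier classes. *)

theory Defs
  imports "HOL-Algebra.Algebra"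
begin

text \<open>Lattice N = M = int x int.  A maximal cone is encoded by the ordered pair (u,v)
  of its primitive ray generators, with det(u,v) > 0.\<close>

type_synonym lat = "int \<times> int"

definition det2 :: "lat \<Rightarrow> lat \<Rightarrow> int" where
  "det2 u v = fst u * snd v - snd u * fst v"

definition pair :: "lat \<Rightarrow> lat \<Rightarrow> int" where
  "pair m u = fst m * fst u + snd m * snd u"

definition primitive :: "lat \<Rightarrow> bool" where
  "primitive u \<longleftrightarrow> gcd (fst u) (snd u) = 1"

definition cone_set :: "lat \<times> lat \<Rightarrow> (real \<times> real) set" where
  "cone_set c = {(a * of_int (fst (fst c)) + b * of_int (fst (snd c)),
                  a * of_int (snd (fst c)) + b * of_int (snd (snd c))) | a b. a \<ge> 0 \<and> b \<ge> 0}"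

definition ray_set :: "lat \<Rightarrow> (real \<times> real) set" where
  "ray_set u = {(a * of_int (fst u), a * of_int (snd u)) | a. a \<ge> 0}"

definition complete_fan2 :: "(lat \<times> lat) set \<Rightarrow> bool" where
  "complete_fan2 S \<longleftrightarrow> finite S \<and> S \<noteq> {} \<and>
     (\<forall>(u,v)\<in>S. primitive u \<and> primitive v \<and> det2 u v > 0) \<and>
     (\<forall>c\<in>S. \<forall>c'\<in>S. c \<noteq> c' \<longrightarrow>
        cone_set c \<inter> cone_set c' = {(0,0)} \<or>
        (\<exists>w. (w = fst c \<or> w = snd c) \<and> (w = fst c' \<or> w = snd c') \<and>
             cone_set c \<inter> cone_set c' = ray_set w)) \<and>
     (\<Union>c\<in>S. cone_set c) = UNIV"

definition rays :: "(lat \<times> lat) set \<Rightarrow> lat set" where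
  "rays S = fst ` S \<union> snd ` S"

definition TDiv :: "(lat \<times> lat) set \<Rightarrow> (lat \<Rightarrow> int) set" where
  "TDiv S = {D. \<forall>x. x \<notin> rays S \<longrightarrow> D x = 0}"

definition divisor_grp :: "lat set \<Rightarrow> (lat \<Rightarrow> int) monoid" where
  "divisor_grp R = \<lparr>carrier = {D. \<forall>x. x \<notin> R \<longrightarrow> D x = 0},
                     monoid.mult = (\<lambda>D E x. D x + E x), monoid.one = (\<lambda>x. 0)\<rparr>"

text \<open>Principal torus-invariant divisor div(chi^m) restricted to the ray set R.\<close>
definition prin_div :: "lat set \<Rightarrow> lat \<Rightarrow> (lat \<Rightarrow> int)" where
  "prin_div R m = (\<lambda>u. if u \<in> R then pair m u else 0)"

definition Prin :: "lat set \<Rightarrow> (lat \<Rightarrow> int) set" where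
  "Prin R = range (prin_div R)"

text \<open>A T-Weil divisor is Cartier iff it is locally principal on each affine chart U_sigma.\<close>
definition cartier :: "(lat \<times> lat) set \<Rightarrow> (lat \<Rightarrow> int) \<Rightarrow> bool" where
  "cartier S D \<longleftrightarrow> D \<in> TDiv S \<and>
     (\<forall>(u,v)\<in>S. \<exists>m. D u = pair m u \<and> D v = pair m v)"

text \<open>Projectivity: existence of an ample T-Cartier divisor (strictly convex support function).\<close>
definition projective_fan2 :: "(lat \<times> lat) set \<Rightarrow> bool" where
  "projective_fan2 S \<longleftrightarrow> (\<exists>D. cartier S D \<and>
     (\<forall>(u,v)\<in>S. \<exists>m. \<forall>w\<in>rays S.
        pair m w \<ge> - D w \<and> (pair m w = - D w \<longleftrightarrow> w = u \<or> w = v)))"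

definition Cl_grp :: "(lat \<times> lat) set \<Rightarrow> (lat \<Rightarrow> int) set monoid" where
  "Cl_grp S = divisor_grp (rays S) Mod Prin (rays S)"

definition Pic_sub :: "(lat \<times> lat) set \<Rightarrow> (lat \<Rightarrow> int) set set" where
  "Pic_sub S = {r_coset (divisor_grp (rays S)) (Prin (rays S)) D | D. cartier S D}"

definition Cl_tors :: "(lat \<times> lat) set \<Rightarrow> (lat \<Rightarrow> int) set set" where
  "Cl_tors S = {c \<in> carrier (Cl_grp S). \<exists>k::nat. k > 0 \<and> c [^]\<^bsub>Cl_grp S\<^esub> k = \<one>\<^bsub>Cl_grp S\<^esub>}"

text \<open>Local class group Cl(Z, z_sigma) = Cl(U_sigma) for the affine chart of sigma = cone(u,v).\<close>
definition local_Cl_grp :: "lat \<times> lat \<Rightarrow> (lat \<Rightarrow> int) set monoid" where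
  "local_Cl_grp c = divisor_grp {fst c, snd c} Mod Prin {fst c, snd c}"

end

theory Submission
  imports Defs "HOL-Library.Product_Plus"
begin

text \<open>
  Write the rays of the fan in cyclic order rho_0, ..., rho_(n-1) and let
  d_i = det(rho_i, rho_(i+1)), the order of the local class group at the i-th fixed point.
  A T-divisor D is Cartier iff on every cone the pair (D rho_i, D rho_(i+1)) is given by a
  character; the obstruction lies in Z/d_i, and the resulting defect map from T-divisors to
  prod_i Z/d_i has the Cartier divisors as kernel, so its image has [Cl : Pic] elements.
  Choosing w_i with <w_i, rho_i> = 1, the map (xi_i) |-> sum_i xi_i w_i identifies its cokernel
  with M / L, where L is the sum of the annihilators of the rays.  Both M / L and the torsion
  of Cl (classes of divisors given by rational characters that are integral on the rays) have
  order [N : N'], where N' is the sublattice spanned by the rays.  Hence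
  prod_i d_i = [N : N'] [Cl : Pic] = |Cl_tors| [Cl : Pic].
\<close>

section \<open>Arithmetic of the plane lattice\<close>

definition smul :: "int \<Rightarrow> lat \<Rightarrow> lat" where
  "smul k x = (k * fst x, k * snd x)"

definition rot :: "lat \<Rightarrow> lat" where
  "rot x = (- snd x, fst x)"

lemma smul_simps [simp]: "fst (smul k x) = k * fst x" "snd (smul k x) = k * snd x"
  and rot_simps [simp]: "fst (rot x) = - snd x" "snd (rot x) = fst x"
  by (simp_all add: smul_def rot_def)

lemma smul_0 [simp]: "smul 0 x = 0" "smul k 0 = 0"
  and smul_1 [simp]: "smul 1 x = x"
  by (simp_all add: smul_def zero_prod_def)

lemma smul_add_left: "smul (k + l) x = smul k x + smul l x"
  and smul_diff_left: "smul (k - l) x = smul k x - smul l x"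
  and smul_add_right: "smul k (x + y) = smul k x + smul k y"
  and smul_smul: "smul k (smul l x) = smul (k * l) x"
  by (simp_all add: smul_def algebra_simps)

lemma rot_add: "rot (x + y) = rot x + rot y"
  and rot_smul: "rot (smul k x) = smul k (rot x)"
  and rot_zero: "rot 0 = 0"
  by (simp_all add: rot_def smul_def zero_prod_def)

lemma rot_sum: "rot (\<Sum>i\<in>A. f i) = (\<Sum>i\<in>A. rot (f i))"
  by (induction A rule: infinite_finite_induct) (simp_all add: rot_add rot_zero)

lemma pair_add_left [simp]: "pair (x + y) r = pair x r + pair y r"
  and pair_diff_left [simp]: "pair (x - y) r = pair x r - pair y r"
  and pair_minus_left [simp]: "pair (- x) r = - pair x r"
  and pair_smul_left [simp]: "pair (smul k x) r = k * pair x r"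
  and pair_zero_left [simp]: "pair 0 r = 0"
  and pair_add_right: "pair m (x + y) = pair m x + pair m y"
  and pair_smul_right: "pair m (smul k x) = k * pair m x"
  and pair_zero_right: "pair m 0 = 0"
  and pair_rot_left: "pair (rot v) u = - det2 u v"
  by (simp_all add: pair_def det2_def algebra_simps)

lemma pair_sum_right: "pair m (\<Sum>i\<in>A. f i) = (\<Sum>i\<in>A. pair m (f i))"
  by (induction A rule: infinite_finite_induct) (simp_all add: pair_add_right pair_zero_right)

lemma det2_self [simp]: "det2 x x = 0"
  and det2_swap: "det2 x y = - det2 y x"
  and det2_rot [simp]: "det2 (rot x) (rot y) = det2 x y"
  and det2_add_left: "det2 (x + y) z = det2 x z + det2 y z"
  and det2_add_right: "det2 z (x + y) = det2 z x + det2 z y"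
  and det2_diff_left: "det2 (x - y) z = det2 x z - det2 y z"
  and det2_diff_right: "det2 z (x - y) = det2 z x - det2 z y"
  and det2_smul_left: "det2 (smul k x) z = k * det2 x z"
  and det2_smul_right: "det2 z (smul k x) = k * det2 z x"
  by (simp_all add: det2_def algebra_simps)

lemma det2_lincomb:
  "det2 (smul i x + smul j y) (smul k x + smul l y) = (i * l - j * k) * det2 x y"
  by (simp add: det2_def algebra_simps)

lemma cramer: "smul (det2 u v) x = smul (det2 x v) u + smul (det2 u x) v"
  by (simp add: prod_eq_iff det2_def algebra_simps)

text \<open>The two-dimensional case of the expansion of a double cross product.\<close>
lemma smul_pair_expansion: "smul (pair w v) m = smul (pair m v) w + smul (det2 w m) (rot v)"
  by (simp add: prod_eq_iff pair_def det2_def algebra_simps)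

definition bezout_vec :: "lat \<Rightarrow> lat" where
  "bezout_vec v = (SOME w. pair w v = 1)"

lemma pair_bezout_vec: "primitive v \<Longrightarrow> pair (bezout_vec v) v = 1"
proof -
  assume "primitive v"
  obtain a b where "a * fst v + b * snd v = gcd (fst v) (snd v)"
    using bezout_int by blast
  with \<open>primitive v\<close> have "pair (a, b) v = 1"
    by (simp add: pair_def primitive_def)
  then show ?thesis
    unfolding bezout_vec_def by (rule someI)
qed

lemma primitive_decomp:
  assumes "primitive v"
  shows "m = smul (pair m v) (bezout_vec v) + smul (det2 (bezout_vec v) m) (rot v)"
  using smul_pair_expansion[of "bezout_vec v" v m] by (simp add: pair_bezout_vec[OF assms])

text \<open>Local Cartier criterion for the cone spanned by u and v.\<close>
lemma ex_pair_eq_iff_dvd: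
  assumes "primitive v"
  shows "(\<exists>m. x = pair m u \<and> y = pair m v) \<longleftrightarrow> det2 u v dvd x - y * pair (bezout_vec v) u"
proof
  assume "\<exists>m. x = pair m u \<and> y = pair m v"
  then obtain m where m: "x = pair m u" "y = pair m v" by blast
  have "x = y * pair (bezout_vec v) u - det2 (bezout_vec v) m * det2 u v"
    using arg_cong[OF primitive_decomp[OF assms, of m], of "\<lambda>m. pair m u"]
    by (simp add: m pair_rot_left)
  then have "x - y * pair (bezout_vec v) u = det2 u v * (- det2 (bezout_vec v) m)"
    by simp
  then show "det2 u v dvd x - y * pair (bezout_vec v) u" ..
next
  assume "det2 u v dvd x - y * pair (bezout_vec v) u"
  then obtain k where k: "x - y * pair (bezout_vec v) u = det2 u v * k" by blast
  show "\<exists>m. x = pair m u \<and> y = pair m v"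
    by (intro exI[of _ "smul y (bezout_vec v) + smul (- k) (rot v)"])
       (use k pair_bezout_vec[OF assms] in \<open>simp add: pair_rot_left algebra_simps\<close>)
qed

section \<open>Subgroups of the plane lattice and their index\<close>

definition additive_subgroup :: "lat set \<Rightarrow> bool" where
  "additive_subgroup H \<longleftrightarrow> 0 \<in> H \<and> (\<forall>x\<in>H. \<forall>y\<in>H. x + y \<in> H \<and> x - y \<in> H)"

definition span2 :: "lat \<Rightarrow> lat \<Rightarrow> lat set" where
  "span2 u v = {smul i u + smul j v | i j. True}"

lemma additive_subgroup_zero: "additive_subgroup H \<Longrightarrow> 0 \<in> H"
  and additive_subgroup_add: "additive_subgroup H \<Longrightarrow> x \<in> H \<Longrightarrow> y \<in> H \<Longrightarrow> x + y \<in> H"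
  and additive_subgroup_diff: "additive_subgroup H \<Longrightarrow> x \<in> H \<Longrightarrow> y \<in> H \<Longrightarrow> x - y \<in> H"
  by (auto simp: additive_subgroup_def)

lemma additive_subgroup_smul:
  assumes H: "additive_subgroup H" and x: "x \<in> H"
  shows "smul k x \<in> H"
proof (induction k rule: int_induct[where k = 0])
  case base
  then show ?case using additive_subgroup_zero[OF H] by simp
next
  case (step1 i)
  then show ?case using additive_subgroup_add[OF H _ x] by (simp add: smul_add_left)
next
  case (step2 i)
  then show ?case using additive_subgroup_diff[OF H _ x] by (simp add: smul_diff_left)
qed

lemma additive_subgroup_sum:
  "additive_subgroup H \<Longrightarrow> (\<And>i. i \<in> A \<Longrightarrow> f i \<in> H) \<Longrightarrow> (\<Sum>i\<in>A. f i) \<in> H"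
  by (induction A rule: infinite_finite_induct)
     (simp_all add: additive_subgroup_add additive_subgroup_zero)

lemma mem_span2: "x \<in> span2 u v \<longleftrightarrow> (\<exists>i j. x = smul i u + smul j v)"
  by (simp add: span2_def)

lemma additive_subgroup_span2: "additive_subgroup (span2 u v)"
proof -
  have "x + y \<in> span2 u v \<and> x - y \<in> span2 u v"
    if xy: "x \<in> span2 u v" "y \<in> span2 u v" for x y
  proof -
    obtain i j k l where "x = smul i u + smul j v" "y = smul k u + smul l v"
      using xy unfolding mem_span2 by blast
    then have "x + y = smul (i + k) u + smul (j + l) v" "x - y = smul (i - k) u + smul (j - l) v"
      by (simp_all add: prod_eq_iff algebra_simps)
    then show ?thesis unfolding mem_span2 by blast
  qed
  moreover have "0 \<in> span2 u v" unfolding mem_span2 by (intro exI[of _ 0]) simp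
  ultimately show ?thesis unfolding additive_subgroup_def by blast
qed

lemma span2_subset: "additive_subgroup H \<Longrightarrow> u \<in> H \<Longrightarrow> v \<in> H \<Longrightarrow> span2 u v \<subseteq> H"
  unfolding span2_def by (auto intro!: additive_subgroup_add additive_subgroup_smul)

lemma span2_base: "u \<in> span2 u v" "v \<in> span2 u v"
  unfolding span2_def by (force intro: exI[of _ 0] exI[of _ 1])+

definition lattice_span :: "nat \<Rightarrow> (nat \<Rightarrow> lat) \<Rightarrow> lat set" where
  "lattice_span n g = {\<Sum>i<n. smul (k i) (g i) | k. True}"

lemma mem_lattice_span: "x \<in> lattice_span n g \<longleftrightarrow> (\<exists>k. x = (\<Sum>i<n. smul (k i) (g i)))"
  by (simp add: lattice_span_def)

lemma additive_subgroup_lattice_span: "additive_subgroup (lattice_span n g)"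
proof -
  have "x + y \<in> lattice_span n g \<and> x - y \<in> lattice_span n g"
    if xy: "x \<in> lattice_span n g" "y \<in> lattice_span n g" for x y
  proof -
    obtain k l where "x = (\<Sum>i<n. smul (k i) (g i))" "y = (\<Sum>i<n. smul (l i) (g i))"
      using xy unfolding mem_lattice_span by blast
    then have "x + y = (\<Sum>i<n. smul (k i + l i) (g i))" "x - y = (\<Sum>i<n. smul (k i - l i) (g i))"
      by (simp_all add: smul_add_left smul_diff_left sum.distrib sum_subtractf)
    then show ?thesis unfolding mem_lattice_span by (intro conjI) (rule exI, assumption)+
  qed
  moreover have "0 \<in> lattice_span n g"
    unfolding mem_lattice_span by (intro exI[of _ "\<lambda>i. 0"]) simp
  ultimately show ?thesis unfolding additive_subgroup_def by blast
qed

lemma generator_in_lattice_span: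
  assumes "i < n"
  shows "g i \<in> lattice_span n g"
proof -
  have "(\<Sum>j<n. smul (if j = i then 1 else 0) (g j)) = (\<Sum>j<n. if j = i then g j else 0)"
    by (rule sum.cong) auto
  also have "\<dots> = g i" using assms by simp
  finally show ?thesis unfolding mem_lattice_span by (metis (no_types))
qed

lemma lattice_span_rot: "lattice_span n (\<lambda>i. rot (g i)) = rot ` lattice_span n g"
proof -
  have rot_comb: "(\<Sum>i<n. smul (k i) (rot (g i))) = rot (\<Sum>i<n. smul (k i) (g i))" for k
    by (simp add: rot_sum rot_smul)
  show ?thesis
  proof (intro equalityI subsetI)
    fix x assume "x \<in> lattice_span n (\<lambda>i. rot (g i))"
    then obtain k where x: "x = rot (\<Sum>i<n. smul (k i) (g i))"
      unfolding mem_lattice_span rot_comb by blast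
    have "(\<Sum>i<n. smul (k i) (g i)) \<in> lattice_span n g" unfolding mem_lattice_span by blast
    with x show "x \<in> rot ` lattice_span n g" by blast
  next
    fix x assume "x \<in> rot ` lattice_span n g"
    then obtain y where "y \<in> lattice_span n g" "x = rot y" by blast
    then obtain k where "x = rot (\<Sum>i<n. smul (k i) (g i))"
      unfolding mem_lattice_span by blast
    then show "x \<in> lattice_span n (\<lambda>i. rot (g i))"
      unfolding mem_lattice_span rot_comb by blast
  qed
qed

lemma span2_rot: "span2 (rot u) (rot v) = rot ` span2 u v"
proof -
  have rot_comb: "smul i (rot u) + smul j (rot v) = rot (smul i u + smul j v)" for i j
    by (simp add: rot_add rot_smul)
  show ?thesis
  proof (intro equalityI subsetI)
    fix x assume "x \<in> span2 (rot u) (rot v)"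
    then obtain i j where x: "x = rot (smul i u + smul j v)" unfolding mem_span2 rot_comb by blast
    have "smul i u + smul j v \<in> span2 u v" unfolding mem_span2 by blast
    with x show "x \<in> rot ` span2 u v" by blast
  next
    fix x assume "x \<in> rot ` span2 u v"
    then obtain y where "y \<in> span2 u v" "x = rot y" by blast
    then obtain i j where "x = rot (smul i u + smul j v)" unfolding mem_span2 by blast
    then show "x \<in> span2 (rot u) (rot v)" unfolding mem_span2 rot_comb by blast
  qed
qed

lemma int_subgroup_generator:
  fixes I :: "int set"
  assumes diff: "\<And>x y. x \<in> I \<Longrightarrow> y \<in> I \<Longrightarrow> x - y \<in> I" and z: "z \<in> I" "z \<noteq> 0"
  shows "\<exists>c>0. c \<in> I \<and> (\<forall>x\<in>I. c dvd x)"
proof -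
  have mult: "k * x \<in> I" if "x \<in> I" for k x
  proof (induction k rule: int_induct[where k = 0])
    case base
    show ?case using diff[OF that that] by simp
  next
    case (step1 i)
    have "i * x - (x - x - x) \<in> I" using step1 that by (intro diff) auto
    then show ?case by (simp add: algebra_simps)
  next
    case (step2 i)
    have "i * x - x \<in> I" using step2 that by (intro diff)
    then show ?case by (simp add: algebra_simps)
  qed
  have "\<bar>z\<bar> \<in> I" using mult[OF z(1), of "sgn z"] by (simp add: abs_sgn mult.commute)
  then have ex: "\<exists>n::nat. n > 0 \<and> int n \<in> I" using z(2) by (intro exI[of _ "nat \<bar>z\<bar>"]) simp
  define c where "c = int (LEAST n. n > 0 \<and> int n \<in> I)"
  have c: "c > 0" "c \<in> I" using LeastI_ex[OF ex] by (simp_all add: c_def)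
  have least: "c \<le> y" if "y \<in> I" "y > 0" for y
    using Least_le[of "\<lambda>n. n > 0 \<and> int n \<in> I" "nat y"] that by (simp add: c_def)
  have "c dvd x" if "x \<in> I" for x
  proof -
    have "x mod c = x - (x div c) * c" by (simp add: minus_div_mult_eq_mod)
    then have "x mod c \<in> I" using diff[OF that mult[OF c(2)]] by simp
    moreover have "0 \<le> x mod c" "x mod c < c" using c(1) by simp_all
    ultimately have "x mod c = 0" using least by force
    then show ?thesis by (simp add: dvd_eq_mod_eq_0)
  qed
  then show ?thesis using c by blast
qed

lemma additive_subgroup_coordinate_generator:
  fixes \<phi> :: "lat \<Rightarrow> int"
  assumes H: "additive_subgroup H" and \<phi>: "\<And>x y. \<phi> (x - y) = \<phi> x - \<phi> y"
    and z: "z \<in> H" "\<phi> z \<noteq> 0"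
  shows "\<exists>c>0. c \<in> \<phi> ` H \<and> (\<forall>x\<in>H. c dvd \<phi> x)"
proof -
  have "x - y \<in> \<phi> ` H" if xy: "x \<in> \<phi> ` H" "y \<in> \<phi> ` H" for x y
  proof -
    obtain p q where "p \<in> H" "q \<in> H" "x = \<phi> p" "y = \<phi> q" using xy by blast
    then show ?thesis using additive_subgroup_diff[OF H] \<phi> by (metis image_eqI)
  qed
  then show ?thesis using int_subgroup_generator[of "\<phi> ` H" "\<phi> z"] z by blast
qed

lemma additive_subgroup_axis: "additive_subgroup H \<Longrightarrow> additive_subgroup {z \<in> H. snd z = 0}"
  by (simp add: additive_subgroup_def)

lemma additive_subgroup_hnf:
  assumes H: "additive_subgroup H" and u: "u \<in> H" and v: "v \<in> H" and d: "det2 u v \<noteq> 0"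
  shows "\<exists>a b c. a > 0 \<and> c > 0 \<and> H = span2 (a, 0) (b, c)"
proof -
  obtain z where z: "z \<in> H" "snd z \<noteq> 0"
    using u v d by (cases "snd u = 0") (auto simp: det2_def)
  then obtain c where c: "c > 0" "c \<in> snd ` H" and c_dvd: "\<forall>z\<in>H. c dvd snd z"
    using additive_subgroup_coordinate_generator[OF H snd_diff z] by blast
  then obtain b where bc: "(b, c) \<in> H" by force
  let ?H0 = "{z \<in> H. snd z = 0}"
  have "smul (snd v) u - smul (snd u) v \<in> H"
    using u v by (intro additive_subgroup_diff[OF H] additive_subgroup_smul[OF H])
  moreover have "smul (snd v) u - smul (snd u) v = (det2 u v, 0)"
    by (simp add: prod_eq_iff det2_def algebra_simps)
  ultimately have "(det2 u v, 0) \<in> ?H0" by simp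
  moreover have "fst (det2 u v, 0) \<noteq> 0" using d by simp
  ultimately obtain a where a: "a > 0" "a \<in> fst ` ?H0" and a_dvd: "\<forall>z\<in>?H0. a dvd fst z"
    using additive_subgroup_coordinate_generator[OF additive_subgroup_axis[OF H] fst_diff] by blast
  then have a0: "(a, 0) \<in> H" by (auto simp: image_iff)
  have "H \<subseteq> span2 (a, 0) (b, c)"
  proof
    fix z assume z: "z \<in> H"
    obtain q where q: "snd z = c * q" using c_dvd z by blast
    have "z - smul q (b, c) \<in> ?H0"
      using z bc q by (simp add: additive_subgroup_diff[OF H] additive_subgroup_smul[OF H])
    then obtain p where p: "fst (z - smul q (b, c)) = a * p" using a_dvd by blast
    have "z = smul p (a, 0) + smul q (b, c)"
      using p q by (simp add: prod_eq_iff algebra_simps)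
    then show "z \<in> span2 (a, 0) (b, c)" unfolding mem_span2 by blast
  qed
  with span2_subset[OF H a0 bc] a(1) c(1) show ?thesis by blast
qed

lemma card_image_eq_if_same_fibres:
  assumes "\<And>a b. a \<in> A \<Longrightarrow> b \<in> A \<Longrightarrow> f a = f b \<longleftrightarrow> h a = h b"
  shows "card (f ` A) = card (h ` A)"
proof -
  let ?g = "\<lambda>y. h (inv_into A f y)"
  have "?g (f a) = h a" if "a \<in> A" for a
  proof -
    have "inv_into A f (f a) \<in> A" "f (inv_into A f (f a)) = f a"
      using that by (simp_all add: inv_into_into f_inv_into_f)
    then show ?thesis using assms that by blast
  qed
  then have "h ` A = ?g ` f ` A" by (simp add: image_image cong: image_cong)
  moreover have "inj_on ?g (f ` A)"
  proof (rule inj_onI)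
    fix x y assume "x \<in> f ` A" "y \<in> f ` A" "?g x = ?g y"
    then show "x = y"
      using assms[of "inv_into A f x" "inv_into A f y"] by (auto simp: inv_into_into f_inv_into_f)
  qed
  ultimately show ?thesis by (simp add: card_image)
qed

lemma card_eq_card_image_mult_fibres:
  assumes "finite A" and "\<And>x. x \<in> A \<Longrightarrow> card {y \<in> A. f y = f x} = k"
  shows "card A = card (f ` A) * k"
proof -
  have "A = (\<Union>b\<in>f ` A. {y \<in> A. f y = b})" by auto
  moreover have "card (\<Union>b\<in>f ` A. {y \<in> A. f y = b}) = (\<Sum>b\<in>f ` A. card {y \<in> A. f y = b})"
    by (rule card_UN_disjoint) (use assms(1) in auto)
  ultimately have "card A = (\<Sum>b\<in>f ` A. card {y \<in> A. f y = b})" by simp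
  also have "\<dots> = (\<Sum>b\<in>f ` A. k)" using assms(2) by (intro sum.cong) auto
  finally show ?thesis by simp
qed

definition lattice_index :: "lat set \<Rightarrow> nat" where
  "lattice_index H = card (range (\<lambda>x. {y. x - y \<in> H}))"

lemma coset_eq_iff:
  assumes "additive_subgroup H"
  shows "{y. x - y \<in> H} = {y. x' - y \<in> H} \<longleftrightarrow> x - x' \<in> H"
proof
  assume eq: "{y. x - y \<in> H} = {y. x' - y \<in> H}"
  have "x' \<in> {y. x' - y \<in> H}" using additive_subgroup_zero[OF assms] by simp
  then have "x' \<in> {y. x - y \<in> H}" by (simp only: eq)
  then show "x - x' \<in> H" by simp
next
  assume xx': "x - x' \<in> H"
  have "x - y \<in> H \<longleftrightarrow> x' - y \<in> H" for y
  proof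
    assume "x - y \<in> H"
    from additive_subgroup_diff[OF assms this xx'] show "x' - y \<in> H" by simp
  next
    assume "x' - y \<in> H"
    from additive_subgroup_add[OF assms xx' this] show "x - y \<in> H" by simp
  qed
  then show "{y. x - y \<in> H} = {y. x' - y \<in> H}" by simp
qed

lemma lattice_index_eq_card_range:
  assumes "additive_subgroup H" and "\<And>x y. f x = f y \<longleftrightarrow> x - y \<in> H"
  shows "lattice_index H = card (range f)"
  unfolding lattice_index_def
  by (rule card_image_eq_if_same_fibres) (simp only: coset_eq_iff[OF assms(1)] assms(2))

lemma mem_span2_hnf:
  assumes "c > 0"
  shows "z \<in> span2 (a, 0) (b, c) \<longleftrightarrow> c dvd snd z \<and> a dvd fst z - snd z div c * b"
proof
  assume "z \<in> span2 (a, 0) (b, c)"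
  then obtain i j where "z = smul i (a, 0) + smul j (b, c)" unfolding mem_span2 by blast
  then show "c dvd snd z \<and> a dvd fst z - snd z div c * b" using assms by simp
next
  assume "c dvd snd z \<and> a dvd fst z - snd z div c * b"
  then obtain i j where "snd z = c * j" "fst z - j * b = a * i" using assms by fastforce
  then have "z = smul i (a, 0) + smul j (b, c)" by (simp add: prod_eq_iff algebra_simps)
  then show "z \<in> span2 (a, 0) (b, c)" unfolding mem_span2 by blast
qed

lemma lattice_index_hnf:
  assumes a: "a > 0" and c: "c > 0"
  shows "lattice_index (span2 (a, 0) (b, c)) = nat (a * c)"
proof -
  define f where "f x = (snd x mod c, (fst x - snd x div c * b) mod a)" for x :: lat
  have "f x = f y \<longleftrightarrow> x - y \<in> span2 (a, 0) (b, c)" for x y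
  proof (cases "snd x mod c = snd y mod c")
    case True
    have "snd x - snd y = (snd x div c * c + snd x mod c) - (snd y div c * c + snd y mod c)"
      by simp
    also have "\<dots> = c * (snd x div c - snd y div c)"
      using True by (simp add: algebra_simps)
    finally have "snd x - snd y = c * (snd x div c - snd y div c)" .
    then have q: "snd (x - y) div c = snd x div c - snd y div c" using c by simp
    have "f x = f y \<longleftrightarrow> a dvd (fst x - snd x div c * b) - (fst y - snd y div c * b)"
      using True by (simp add: f_def mod_eq_dvd_iff)
    also have "(fst x - snd x div c * b) - (fst y - snd y div c * b) = fst (x - y) - snd (x - y) div c * b"
      unfolding q by (simp add: algebra_simps)
    finally show ?thesis using True c by (simp add: mem_span2_hnf mod_eq_dvd_iff)
  next
    case False
    then show ?thesis using c by (simp add: mem_span2_hnf f_def mod_eq_dvd_iff)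
  qed
  then have "lattice_index (span2 (a, 0) (b, c)) = card (range f)"
    by (intro lattice_index_eq_card_range additive_subgroup_span2)
  also have "range f = {0..<c} \<times> {0..<a}"
  proof
    show "range f \<subseteq> {0..<c} \<times> {0..<a}" using a c by (auto simp: f_def)
    show "{0..<c} \<times> {0..<a} \<subseteq> range f"
    proof
      fix p assume "p \<in> {0..<c} \<times> {0..<a}"
      then have "f (snd p, fst p) = p" by (auto simp: f_def prod_eq_iff)
      then show "p \<in> range f" by (metis rangeI)
    qed
  qed
  finally show ?thesis using a c by (simp add: nat_mult_distrib)
qed

lemma abs_det2_eq_if_span2_eq:
  assumes eq: "span2 u v = span2 u' v'" and d: "det2 u v \<noteq> 0"
  shows "\<bar>det2 u v\<bar> = \<bar>det2 u' v'\<bar>"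
proof -
  have "u' \<in> span2 u v" "v' \<in> span2 u v" by (simp_all add: eq span2_base)
  then obtain i j k l where "u' = smul i u + smul j v" "v' = smul k u + smul l v"
    unfolding mem_span2 by blast
  then have p: "det2 u' v' = (i * l - j * k) * det2 u v" by (simp add: det2_lincomb)
  have "u \<in> span2 u' v'" "v \<in> span2 u' v'" by (simp_all flip: eq add: span2_base)
  then obtain i' j' k' l' where "u = smul i' u' + smul j' v'" "v = smul k' u' + smul l' v'"
    unfolding mem_span2 by blast
  then have q: "det2 u v = (i' * l' - j' * k') * det2 u' v'" by (simp add: det2_lincomb)
  have "det2 u v = ((i' * l' - j' * k') * (i * l - j * k)) * det2 u v"
    using p q by (simp add: mult.assoc)
  then have "(i' * l' - j' * k') * (i * l - j * k) = 1" using d by (simp add: mult_cancel_right1)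
  then have "\<bar>(i * l - j * k) * (i' * l' - j' * k')\<bar> = 1" by (simp add: mult.commute)
  then have "\<bar>i * l - j * k\<bar> = 1" by (rule abs_zmult_eq_1)
  then show ?thesis using p by (simp add: abs_mult)
qed

lemma lattice_index_span2:
  assumes "det2 u v \<noteq> 0"
  shows "lattice_index (span2 u v) = nat \<bar>det2 u v\<bar>"
proof -
  obtain a b c where abc: "a > 0" "c > 0" "span2 u v = span2 (a, 0) (b, c)"
    using additive_subgroup_hnf[OF additive_subgroup_span2 span2_base assms] by blast
  have "\<bar>det2 u v\<bar> = \<bar>det2 (a, 0) (b, c)\<bar>" by (rule abs_det2_eq_if_span2_eq[OF abc(3) assms])
  with abc show ?thesis by (simp add: lattice_index_hnf det2_def abs_mult)
qed

section \<open>Complete fans in the plane\<close>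

definition real_of_lat :: "lat \<Rightarrow> real \<times> real" where
  "real_of_lat x = (of_int (fst x), of_int (snd x))"

lemma real_of_lat_mem_cone_set:
  assumes d: "det2 u v > 0"
  shows "real_of_lat x \<in> cone_set (u, v) \<longleftrightarrow> det2 u x \<ge> 0 \<and> det2 x v \<ge> 0"
proof
  assume "real_of_lat x \<in> cone_set (u, v)"
  then obtain a b :: real where ab: "a \<ge> 0" "b \<ge> 0"
    and x: "of_int (fst x) = a * of_int (fst u) + b * of_int (fst v)"
           "of_int (snd x) = a * of_int (snd u) + b * of_int (snd v)"
    unfolding cone_set_def real_of_lat_def by auto
  have "of_int (det2 u x) = b * of_int (det2 u v)" "of_int (det2 x v) = a * of_int (det2 u v)"
    by (simp_all add: det2_def x algebra_simps)
  then have "of_int (det2 u x) \<ge> (0::real)" "of_int (det2 x v) \<ge> (0::real)"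
    using ab d by simp_all
  then show "det2 u x \<ge> 0 \<and> det2 x v \<ge> 0" by simp
next
  assume h: "det2 u x \<ge> 0 \<and> det2 x v \<ge> 0"
  define a where "a = (of_int (det2 x v) / of_int (det2 u v) :: real)"
  define b where "b = (of_int (det2 u x) / of_int (det2 u v) :: real)"
  have "a \<ge> 0" "b \<ge> 0" using h d by (simp_all add: a_def b_def)
  moreover have "of_int (fst x) = a * of_int (fst u) + b * of_int (fst v)"
    and "of_int (snd x) = a * of_int (snd u) + b * of_int (snd v)"
    using arg_cong[OF cramer[of u v x], of "\<lambda>p. real_of_int (fst p)"]
      arg_cong[OF cramer[of u v x], of "\<lambda>p. real_of_int (snd p)"] d
    by (simp_all add: a_def b_def field_simps)
  ultimately show "real_of_lat x \<in> cone_set (u, v)"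
    unfolding cone_set_def real_of_lat_def by auto
qed

lemma real_of_lat_mem_ray_set: "real_of_lat x \<in> ray_set w \<Longrightarrow> det2 w x = 0"
proof -
  assume "real_of_lat x \<in> ray_set w"
  then obtain a :: real where "of_int (fst x) = a * of_int (fst w)" "of_int (snd x) = a * of_int (snd w)"
    unfolding ray_set_def real_of_lat_def by auto
  then have "real_of_int (det2 w x) = 0" by (simp add: det2_def)
  then show ?thesis by simp
qed

lemma nonneg_if_large_multiple_nonneg:
  fixes K d e :: int
  assumes "K > \<bar>e\<bar>" "K * d - e \<ge> 0"
  shows "d \<ge> 0"
proof (rule ccontr)
  assume "\<not> d \<ge> 0"
  then have "K * d \<le> K * (-1)" using assms(1) by (intro mult_left_mono) auto
  then show False using assms by linarith
qed

lemma det2_pos_trans: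
  fixes s :: int
  assumes side: "s * det2 y x > 0" "s * det2 z x > 0" "s * det2 w x > 0"
    and "det2 y z > 0" "det2 z w > 0"
  shows "det2 y w > 0"
proof -
  have "det2 y z * (s * det2 w x) + det2 z w * (s * det2 y x) + det2 w y * (s * det2 z x) = 0"
    by (simp add: det2_def algebra_simps)
  moreover have "det2 y z * (s * det2 w x) > 0" "det2 z w * (s * det2 y x) > 0"
    using assms by simp_all
  ultimately have "det2 w y * (s * det2 z x) < 0" by linarith
  moreover have "a * t < 0 \<Longrightarrow> t > 0 \<Longrightarrow> a < 0" for a t :: int
    by (simp add: mult_less_0_iff)
  ultimately have "det2 w y < 0" using side(2) by blast
  then show ?thesis using det2_swap[of y w] by simp
qed

locale complete_fan =
  fixes S :: "(lat \<times> lat) set"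
  assumes complete: "complete_fan2 S"
begin

lemma finite_cones: "finite S"
  using complete by (simp add: complete_fan2_def)

lemma cone_primitive_det:
  assumes "(u, v) \<in> S"
  shows "primitive u" "primitive v" "det2 u v > 0"
  using assms complete unfolding complete_fan2_def by fast+

lemma lattice_point_covered: "\<exists>(u, v)\<in>S. det2 u x \<ge> 0 \<and> det2 x v \<ge> 0"
proof -
  have "real_of_lat x \<in> (\<Union>c\<in>S. cone_set c)"
    using complete by (simp add: complete_fan2_def)
  then show ?thesis
    using real_of_lat_mem_cone_set cone_primitive_det(3) by fast
qed

lemma common_edge:
  assumes uv: "(u, v) \<in> S" and ab: "(a, b) \<in> S" and ne: "(u, v) \<noteq> (a, b)" and "x \<noteq> 0"
    and "det2 u x \<ge> 0" "det2 x v \<ge> 0" "det2 a x \<ge> 0" "det2 x b \<ge> 0"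
  shows "\<exists>w\<in>{u, v} \<inter> {a, b}. det2 w x = 0"
proof -
  have "real_of_lat x \<in> cone_set (u, v) \<inter> cone_set (a, b)"
    using assms real_of_lat_mem_cone_set cone_primitive_det(3)[OF uv] cone_primitive_det(3)[OF ab]
    by simp
  moreover have "real_of_lat x \<noteq> (0, 0)"
    using \<open>x \<noteq> 0\<close> by (simp add: real_of_lat_def prod_eq_iff)
  moreover have "cone_set c \<inter> cone_set c' = {(0,0)} \<or>
      (\<exists>w. (w = fst c \<or> w = snd c) \<and> (w = fst c' \<or> w = snd c') \<and>
        cone_set c \<inter> cone_set c' = ray_set w)" if "c \<in> S" "c' \<in> S" "c \<noteq> c'" for c c'
    using complete that unfolding complete_fan2_def by blast
  note this[OF uv ab ne, unfolded fst_conv snd_conv]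
  ultimately show ?thesis using real_of_lat_mem_ray_set by blast
qed

lemma interior_cone_unique:
  assumes uv: "(u, v) \<in> S" and ab: "(a, b) \<in> S"
    and interior: "det2 u x > 0" "det2 x v > 0" and "det2 a x \<ge> 0" "det2 x b \<ge> 0"
  shows "(a, b) = (u, v)"
proof (rule ccontr)
  assume ne: "(a, b) \<noteq> (u, v)"
  have "x \<noteq> 0" using interior by (auto simp: det2_def)
  moreover have "det2 u x \<ge> 0" "det2 x v \<ge> 0" using interior by simp_all
  ultimately obtain w where "w \<in> {u, v}" "det2 w x = 0"
    using common_edge[OF uv ab ne[symmetric]] assms(5,6) by blast
  then show False using interior det2_swap[of v x] by auto
qed

lemma next_cone_exists:
  assumes uv: "(u, v) \<in> S"
  shows "\<exists>b. (v, b) \<in> S"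
proof -
  define K where "K = 1 + (\<Sum>c\<in>S. \<bar>det2 (fst c) u\<bar> + \<bar>det2 u (snd c)\<bar>)"
  define p where "p = smul K v - u"
  obtain a b where ab: "(a, b) \<in> S" and p: "det2 a p \<ge> 0" "det2 p b \<ge> 0"
    using lattice_point_covered[of p] by blast
  have "\<bar>det2 a u\<bar> + \<bar>det2 u b\<bar> \<le> K - 1"
    using member_le_sum[OF ab, of "\<lambda>c. \<bar>det2 (fst c) u\<bar> + \<bar>det2 u (snd c)\<bar>"] finite_cones
    unfolding K_def by simp
  then have K: "K > \<bar>det2 a u\<bar>" "K > \<bar>det2 u b\<bar>" by simp_all
  have "det2 a p = K * det2 a v - det2 a u" "det2 p b = K * det2 v b - det2 u b"
    by (simp_all add: p_def det2_diff_left det2_diff_right det2_smul_left det2_smul_right)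
  then have av: "det2 a v \<ge> 0" "det2 v b \<ge> 0"
    using p nonneg_if_large_multiple_nonneg[OF K(1)] nonneg_if_large_multiple_nonneg[OF K(2)]
    by simp_all
  have duv: "det2 u v > 0" using cone_primitive_det(3)[OF uv] .
  have pv: "det2 p v = - det2 u v"
    by (simp add: p_def det2_diff_left det2_smul_left)
  then have "(u, v) \<noteq> (a, b)" using p(2) duv by auto
  moreover have "v \<noteq> 0" using duv by (auto simp: det2_def)
  ultimately obtain w where w: "w \<in> {u, v} \<inter> {a, b}" "det2 w v = 0"
    using common_edge[OF uv ab _ _ _ _ av] duv by fastforce
  then have "v = a \<or> v = b" using duv by auto
  moreover have "v \<noteq> b" using p(2) pv duv by auto
  ultimately show ?thesis using ab by blast
qed

lemma next_cone_unique:
  assumes vb: "(v, b) \<in> S" and vb': "(v, b') \<in> S"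
  shows "b = b'"
proof -
  define K where "K = 1 + \<bar>det2 b b'\<bar>"
  define x where "x = smul K v + b"
  have d: "det2 v b > 0" "det2 v b' > 0" using cone_primitive_det(3) vb vb' by auto
  then have "K * 1 \<le> K * det2 v b'" unfolding K_def by (intro mult_left_mono) auto
  then have "det2 x b' > 0"
    by (simp add: x_def K_def det2_add_left det2_smul_left)
  moreover have "det2 v x > 0" "det2 x b > 0"
    using d by (simp_all add: x_def K_def det2_add_left det2_add_right det2_smul_left det2_smul_right)
  ultimately show ?thesis
    using interior_cone_unique[OF vb vb', of x] by simp
qed

lemma prev_cone_unique:
  assumes av: "(a, v) \<in> S" and av': "(a', v) \<in> S"
  shows "a = a'"
proof -
  define K where "K = 1 + \<bar>det2 a' a\<bar>"
  define x where "x = smul K v + a"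
  have d: "det2 a v > 0" "det2 a' v > 0" using cone_primitive_det(3) av av' by auto
  then have "K * 1 \<le> K * det2 a' v" unfolding K_def by (intro mult_left_mono) auto
  then have "det2 a' x > 0"
    by (simp add: x_def K_def det2_add_right det2_smul_right)
  moreover have "det2 a x > 0" "det2 x v > 0"
    using d by (simp_all add: x_def K_def det2_add_left det2_add_right det2_smul_left det2_smul_right)
  ultimately show ?thesis
    using interior_cone_unique[OF av av', of x] by simp
qed

definition next_ray :: "lat \<Rightarrow> lat" where
  "next_ray v = (THE b. (v, b) \<in> S)"

lemma next_ray_eq: "(v, b) \<in> S \<Longrightarrow> next_ray v = b"
  unfolding next_ray_def using next_cone_unique by blast

lemma cone_next_ray: "v \<in> fst ` S \<Longrightarrow> (v, next_ray v) \<in> S"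
  using next_ray_eq by force

lemma rays_eq_fst: "rays S = fst ` S"
  unfolding rays_def using next_cone_exists by force

definition ray :: "nat \<Rightarrow> lat" where
  "ray k = (next_ray ^^ k) (SOME v. v \<in> fst ` S)"

lemma ray_Suc: "ray (Suc k) = next_ray (ray k)"
  by (simp add: ray_def)

lemma ray_in_fst: "ray k \<in> fst ` S"
proof (induction k)
  case 0
  have "S \<noteq> {}" using complete by (simp add: complete_fan2_def)
  then show ?case unfolding ray_def by (simp add: some_in_eq)
next
  case (Suc k)
  have "(ray k, ray (Suc k)) \<in> S" using cone_next_ray[OF Suc] by (simp add: ray_Suc)
  then have "ray (Suc k) \<in> rays S" unfolding rays_def by force
  then show ?case unfolding rays_eq_fst .
qed

lemma cone_ray: "(ray k, ray (Suc k)) \<in> S"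
  unfolding ray_Suc by (rule cone_next_ray[OF ray_in_fst])

lemma primitive_ray: "primitive (ray k)"
  and det2_ray_pos: "det2 (ray k) (ray (Suc k)) > 0"
  using cone_primitive_det[OF cone_ray] by simp_all

lemma ray_Suc_inj: "ray (Suc i) = ray (Suc j) \<Longrightarrow> ray i = ray j"
  using prev_cone_unique[OF cone_ray[of i]] cone_ray[of j] by simp

lemma ray_eq_imp_period: "i \<le> j \<Longrightarrow> ray i = ray j \<Longrightarrow> ray (j - i) = ray 0"
proof (induction i arbitrary: j)
  case (Suc i)
  then obtain j' where "j = Suc j'" by (cases j) auto
  with Suc.prems show ?case using Suc.IH[of j'] ray_Suc_inj[of i j'] by simp
qed simp

lemma ex_period: "\<exists>n>0. ray n = ray 0"
proof -
  have "finite (range ray)"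
    using ray_in_fst finite_cones by (meson finite_imageI finite_subset image_subsetI)
  then obtain i j where "i < j" "ray i = ray j"
    by (metis (mono_tags) infinite_UNIV_nat linorder_neqE_nat range_inj_infinite inj_def)
  then show ?thesis using ray_eq_imp_period[of i j] by (intro exI[of _ "j - i"]) simp
qed

definition nrays :: nat where
  "nrays = (LEAST n. n > 0 \<and> ray n = ray 0)"

lemma nrays_pos: "nrays > 0" and ray_nrays: "ray nrays = ray 0"
  using LeastI_ex[OF ex_period] unfolding nrays_def by auto

lemma nrays_le_period: "0 < m \<Longrightarrow> ray m = ray 0 \<Longrightarrow> nrays \<le> m"
  unfolding nrays_def by (rule Least_le) simp

lemma ray_add_nrays: "ray (k + nrays) = ray k"
proof -
  have "ray (k + nrays) = (next_ray ^^ k) (ray nrays)" by (simp add: ray_def funpow_add)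
  then show ?thesis using ray_nrays unfolding ray_def by simp
qed

lemma ray_add_mult_nrays: "ray (k + m * nrays) = ray k"
proof (induction m)
  case (Suc m)
  have "ray (k + Suc m * nrays) = ray ((k + m * nrays) + nrays)" by (simp add: algebra_simps)
  then show ?case using ray_add_nrays Suc.IH by simp
qed simp

lemma ray_mod: "ray (k mod nrays) = ray k"
  using ray_add_mult_nrays[of "k mod nrays" "k div nrays"] by simp

lemma inj_on_ray: "inj_on ray {..<nrays}"
proof (rule inj_onI)
  have *: "i = j" if "i \<le> j" "j < nrays" "ray i = ray j" for i j
    using ray_eq_imp_period[OF that(1,3)] nrays_le_period[of "j - i"] that by fastforce
  fix i j assume "i \<in> {..<nrays}" "j \<in> {..<nrays}" "ray i = ray j"
  then show "i = j" using *[of i j] *[of j i] by (cases "i \<le> j") auto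
qed

text \<open>Winding argument: if all rays were strictly on one side of the line through x, the
  orientation of consecutive rays would force det(ray 0, ray nrays) > 0.\<close>
lemma rays_not_on_one_side: "\<not> (\<forall>i. s * det2 (ray i) x > 0)"
proof
  assume side: "\<forall>i. s * det2 (ray i) x > 0"
  have "det2 (ray 0) (ray (Suc k)) > 0" for k
  proof (induction k)
    case 0
    then show ?case by (rule det2_ray_pos)
  next
    case (Suc k)
    then show ?case using det2_pos_trans side det2_ray_pos by blast
  qed
  from this[of "nrays - 1"] show False using nrays_pos ray_nrays by simp
qed

lemma ray_side_propagates:
  assumes step: "\<And>i. det2 (ray i) x \<ge> 0 \<Longrightarrow> det2 (ray (Suc i)) x > 0"
    and j: "det2 (ray j) x \<ge> 0"
  shows "det2 (ray i) x > 0"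
proof -
  have after: "det2 (ray k) x > 0" if "j < k" for k
    using that
  proof (induction k)
    case (Suc k)
    show ?case
    proof (cases "j < k")
      case True
      then show ?thesis using Suc.IH step by (simp add: less_imp_le)
    next
      case False
      then have "k = j" using Suc.prems by simp
      then show ?thesis using step j by simp
    qed
  qed simp
  have "j < Suc j * 1" by simp
  also have "\<dots> \<le> Suc j * nrays" using nrays_pos by (intro mult_le_mono2) simp
  also have "\<dots> \<le> i + Suc j * nrays" by simp
  finally show ?thesis using after ray_add_mult_nrays[of i "Suc j"] by metis
qed

lemma cones_cover: "\<exists>i<nrays. det2 (ray i) x \<ge> 0 \<and> det2 x (ray (Suc i)) \<ge> 0"
proof (rule ccontr)
  assume not_covered: "\<not> ?thesis"
  have step: "det2 (ray (Suc i)) x > 0" if "det2 (ray i) x \<ge> 0" for i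
  proof -
    have "i mod nrays < nrays" using nrays_pos by simp
    moreover have "det2 (ray (i mod nrays)) x \<ge> 0" using that by (simp add: ray_mod)
    ultimately have "\<not> det2 x (ray (Suc (i mod nrays))) \<ge> 0" using not_covered by blast
    moreover have "ray (Suc (i mod nrays)) = ray (Suc i)"
      using ray_mod[of i] by (simp add: ray_Suc)
    ultimately show ?thesis using det2_swap[of x "ray (Suc i)"] by simp
  qed
  show False
  proof (cases "\<exists>j. det2 (ray j) x \<ge> 0")
    case True
    then have "det2 (ray i) x > 0" for i using ray_side_propagates[OF step] by blast
    then show False using rays_not_on_one_side[of 1 x] by simp
  next
    case False
    then show False using rays_not_on_one_side[of "-1" x] by (simp add: not_le)
  qed
qed

lemma fst_cones_eq: "fst ` S = ray ` {..<nrays}"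
proof
  show "fst ` S \<subseteq> ray ` {..<nrays}"
  proof
    fix r assume "r \<in> fst ` S"
    then obtain t where rt: "(r, t) \<in> S" by force
    have d: "det2 r t > 0" using cone_primitive_det(3)[OF rt] .
    obtain i where "i < nrays" "det2 (ray i) (r + t) \<ge> 0" "det2 (r + t) (ray (Suc i)) \<ge> 0"
      using cones_cover by blast
    moreover have "det2 r (r + t) > 0" "det2 (r + t) t > 0"
      using d by (simp_all add: det2_add_left det2_add_right)
    ultimately show "r \<in> ray ` {..<nrays}"
      using interior_cone_unique[OF rt cone_ray] by (metis Pair_inject image_eqI lessThan_iff)
  qed
  show "ray ` {..<nrays} \<subseteq> fst ` S" using ray_in_fst by blast
qed

lemma rays_eq: "rays S = ray ` {..<nrays}"
  using rays_eq_fst fst_cones_eq by simp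

lemma cones_eq: "S = (\<lambda>i. (ray i, ray (Suc i))) ` {..<nrays}"
proof
  show "S \<subseteq> (\<lambda>i. (ray i, ray (Suc i))) ` {..<nrays}"
  proof
    fix c assume c: "c \<in> S"
    then obtain i where i: "i < nrays" "fst c = ray i" using fst_cones_eq by force
    then have "(ray i, snd c) \<in> S" using c by (metis prod.collapse)
    then have "snd c = ray (Suc i)" using next_ray_eq by (simp add: ray_Suc)
    then have "c = (ray i, ray (Suc i))" using i(2) by (simp add: prod_eq_iff)
    with i(1) show "c \<in> (\<lambda>i. (ray i, ray (Suc i))) ` {..<nrays}" by blast
  qed
  show "(\<lambda>i. (ray i, ray (Suc i))) ` {..<nrays} \<subseteq> S" using cone_ray by blast
qed

end

section \<open>Divisor classes and Cartier divisors\<close>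

definition div_class :: "lat set \<Rightarrow> (lat \<Rightarrow> int) \<Rightarrow> (lat \<Rightarrow> int) set" where
  "div_class R D = {E. (\<lambda>x. E x - D x) \<in> Prin R}"

lemma r_coset_Prin: "Prin R #>\<^bsub>divisor_grp R\<^esub> D = div_class R D"
proof -
  have "E \<in> (\<Union>P\<in>Prin R. {\<lambda>x. P x + D x}) \<longleftrightarrow> (\<lambda>x. E x - D x) \<in> Prin R" for E
  proof
    assume "E \<in> (\<Union>P\<in>Prin R. {\<lambda>x. P x + D x})"
    then obtain P where "P \<in> Prin R" "E = (\<lambda>x. P x + D x)" by blast
    then show "(\<lambda>x. E x - D x) \<in> Prin R" by simp
  next
    assume "(\<lambda>x. E x - D x) \<in> Prin R"
    moreover have "E = (\<lambda>x. (E x - D x) + D x)" by simp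
    ultimately show "E \<in> (\<Union>P\<in>Prin R. {\<lambda>x. P x + D x})" by blast
  qed
  then show ?thesis unfolding r_coset_def div_class_def divisor_grp_def by auto
qed

lemma prin_div_add: "(\<lambda>x. prin_div R m x + prin_div R m' x) = prin_div R (m + m')"
  and prin_div_diff: "(\<lambda>x. prin_div R m x - prin_div R m' x) = prin_div R (m - m')"
  and prin_div_scale: "(\<lambda>x. k * prin_div R m x) = prin_div R (smul k m)"
  and prin_div_zero: "prin_div R 0 = (\<lambda>x. 0)"
  by (auto simp: prin_div_def algebra_simps)

lemma Prin_add: "P \<in> Prin R \<Longrightarrow> Q \<in> Prin R \<Longrightarrow> (\<lambda>x. P x + Q x) \<in> Prin R"
  and Prin_diff: "P \<in> Prin R \<Longrightarrow> Q \<in> Prin R \<Longrightarrow> (\<lambda>x. P x - Q x) \<in> Prin R"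
  unfolding Prin_def by (auto simp: prin_div_add prin_div_diff)

lemma Prin_scale: "P \<in> Prin R \<Longrightarrow> (\<lambda>x. k * P x) \<in> Prin R"
  unfolding Prin_def by (auto simp: prin_div_scale)

lemma Prin_zero: "(\<lambda>x. 0) \<in> Prin R"
  unfolding Prin_def using prin_div_zero[of R] by (metis rangeI)

lemma mem_Prin_iff:
  assumes "\<forall>x. x \<notin> R \<longrightarrow> D x = 0"
  shows "D \<in> Prin R \<longleftrightarrow> (\<exists>m. \<forall>r\<in>R. D r = pair m r)"
  using assms unfolding Prin_def prin_div_def by (auto simp: fun_eq_iff) metis

lemma div_class_eq_iff: "div_class R D = div_class R D' \<longleftrightarrow> (\<lambda>x. D x - D' x) \<in> Prin R"
proof
  assume "div_class R D = div_class R D'"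
  moreover have "D \<in> div_class R D" using Prin_zero by (simp add: div_class_def)
  ultimately show "(\<lambda>x. D x - D' x) \<in> Prin R" by (simp add: div_class_def)
next
  assume diff: "(\<lambda>x. D x - D' x) \<in> Prin R"
  have "(\<lambda>x. E x - D' x) \<in> Prin R" if "(\<lambda>x. E x - D x) \<in> Prin R" for E
    using Prin_add[OF that diff] by simp
  moreover have "(\<lambda>x. E x - D x) \<in> Prin R" if "(\<lambda>x. E x - D' x) \<in> Prin R" for E
    using Prin_diff[OF that diff] by simp
  ultimately show "div_class R D = div_class R D'"
    unfolding div_class_def by (intro Collect_cong) blast
qed

lemma set_mult_div_class:
  "div_class R D <#>\<^bsub>divisor_grp R\<^esub> div_class R D' = div_class R (\<lambda>x. D x + D' x)"
proof -
  have "E \<in> div_class R D <#>\<^bsub>divisor_grp R\<^esub> div_class R D' \<longleftrightarrow>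
        (\<exists>P Q. (\<lambda>x. P x - D x) \<in> Prin R \<and> (\<lambda>x. Q x - D' x) \<in> Prin R \<and> E = (\<lambda>x. P x + Q x))" for E
    unfolding set_mult_def div_class_def divisor_grp_def by auto
  moreover have "(\<exists>P Q. (\<lambda>x. P x - D x) \<in> Prin R \<and> (\<lambda>x. Q x - D' x) \<in> Prin R \<and> E = (\<lambda>x. P x + Q x))
      \<longleftrightarrow> (\<lambda>x. E x - (D x + D' x)) \<in> Prin R" for E
  proof
    assume "\<exists>P Q. (\<lambda>x. P x - D x) \<in> Prin R \<and> (\<lambda>x. Q x - D' x) \<in> Prin R \<and> E = (\<lambda>x. P x + Q x)"
    then obtain P Q where "(\<lambda>x. P x - D x) \<in> Prin R" "(\<lambda>x. Q x - D' x) \<in> Prin R"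
      and E: "E = (\<lambda>x. P x + Q x)" by blast
    from Prin_add[OF this(1,2)] show "(\<lambda>x. E x - (D x + D' x)) \<in> Prin R"
      unfolding E by (simp add: algebra_simps)
  next
    assume E: "(\<lambda>x. E x - (D x + D' x)) \<in> Prin R"
    have "(\<lambda>x. (E x - D' x) - D x) \<in> Prin R" "(\<lambda>x. D' x - D' x) \<in> Prin R"
      using E Prin_zero by (simp_all add: algebra_simps)
    moreover have "E = (\<lambda>x. (E x - D' x) + D' x)" by simp
    ultimately show "\<exists>P Q. (\<lambda>x. P x - D x) \<in> Prin R \<and> (\<lambda>x. Q x - D' x) \<in> Prin R \<and> E = (\<lambda>x. P x + Q x)"
      by (intro exI[of _ "\<lambda>x. E x - D' x"] exI[of _ D']) simp
  qed
  ultimately show ?thesis unfolding div_class_def by blast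
qed

lemma carrier_Cl_grp: "carrier (Cl_grp S) = div_class (rays S) ` TDiv S"
  unfolding Cl_grp_def carrier_FactGroup r_coset_Prin
  by (simp add: TDiv_def divisor_grp_def)

lemma one_Cl_grp: "\<one>\<^bsub>Cl_grp S\<^esub> = div_class (rays S) (\<lambda>x. 0)"
  unfolding Cl_grp_def one_FactGroup div_class_def by simp

lemma pow_Cl_grp: "div_class (rays S) D [^]\<^bsub>Cl_grp S\<^esub> (k::nat) = div_class (rays S) (\<lambda>x. int k * D x)"
proof (induction k)
  case 0
  then show ?case by (simp add: one_Cl_grp flip: one_FactGroup[of "divisor_grp (rays S)"])
next
  case (Suc k)
  then show ?case
    by (simp add: Cl_grp_def set_mult_div_class algebra_simps)
qed

lemma card_local_Cl_grp:
  assumes "primitive v" and d: "det2 u v > 0"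
  shows "card (carrier (local_Cl_grp (u, v))) = nat (det2 u v)"
proof -
  let ?G = "divisor_grp {u, v}"
  define f where "f D = (D u - D v * pair (bezout_vec v) u) mod det2 u v" for D :: "lat \<Rightarrow> int"
  have "div_class {u, v} D = div_class {u, v} D' \<longleftrightarrow> f D = f D'"
    if "D \<in> carrier ?G" "D' \<in> carrier ?G" for D D'
  proof -
    have "\<forall>x. x \<notin> {u, v} \<longrightarrow> D x - D' x = 0" using that by (simp add: divisor_grp_def)
    then have "div_class {u, v} D = div_class {u, v} D' \<longleftrightarrow>
        (\<exists>m. D u - D' u = pair m u \<and> D v - D' v = pair m v)"
      unfolding div_class_eq_iff by (subst mem_Prin_iff) auto
    also have "\<dots> \<longleftrightarrow> f D = f D'"
      unfolding ex_pair_eq_iff_dvd[OF assms(1)] f_def by (simp add: mod_eq_dvd_iff algebra_simps)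
    finally show ?thesis .
  qed
  then have "card (carrier (local_Cl_grp (u, v))) = card (f ` carrier ?G)"
    unfolding local_Cl_grp_def carrier_FactGroup r_coset_Prin fst_conv snd_conv
    by (rule card_image_eq_if_same_fibres)
  also have "f ` carrier ?G = {0..<det2 u v}"
  proof
    show "f ` carrier ?G \<subseteq> {0..<det2 u v}" using d by (auto simp: f_def)
    show "{0..<det2 u v} \<subseteq> f ` carrier ?G"
    proof
      fix r assume r: "r \<in> {0..<det2 u v}"
      have "u \<noteq> v" using d by auto
      then have "f (\<lambda>x. if x = u then r else 0) = r" using r by (simp add: f_def)
      moreover have "(\<lambda>x. if x = u then r else 0) \<in> carrier ?G" by (simp add: divisor_grp_def)
      ultimately show "r \<in> f ` carrier ?G" by (metis image_eqI)
    qed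
  qed
  finally show ?thesis by simp
qed

lemma cartier_on_cone:
  assumes "cartier S D" "(u, v) \<in> S"
  obtains m where "D u = pair m u" "D v = pair m v"
proof -
  have "\<forall>(u, v)\<in>S. \<exists>m. D u = pair m u \<and> D v = pair m v"
    using assms(1) by (simp add: cartier_def)
  from bspec[OF this assms(2)] show ?thesis using that by auto
qed

lemma cartier_add_diff:
  assumes "cartier S D" "cartier S D'"
  shows cartier_add: "cartier S (\<lambda>x. D x + D' x)"
    and cartier_diff: "cartier S (\<lambda>x. D x - D' x)"
proof -
  have TDiv: "(\<lambda>x. D x + D' x) \<in> TDiv S" "(\<lambda>x. D x - D' x) \<in> TDiv S"
    using assms by (simp_all add: cartier_def TDiv_def)
  have "(\<exists>m. D u + D' u = pair m u \<and> D v + D' v = pair m v) \<and>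
        (\<exists>m. D u - D' u = pair m u \<and> D v - D' v = pair m v)" if uv: "(u, v) \<in> S" for u v
  proof -
    obtain m m' where "D u = pair m u" "D v = pair m v" "D' u = pair m' u" "D' v = pair m' v"
      using cartier_on_cone[OF assms(1) uv] cartier_on_cone[OF assms(2) uv] by metis
    then show ?thesis by (metis pair_add_left pair_diff_left)
  qed
  with TDiv show "cartier S (\<lambda>x. D x + D' x)" "cartier S (\<lambda>x. D x - D' x)"
    unfolding cartier_def by blast+
qed

lemma cartier_prin_div: "cartier S (prin_div (rays S) m)"
proof -
  have "fst c \<in> rays S" "snd c \<in> rays S" if "c \<in> S" for c
    using that unfolding rays_def by blast+
  then have "\<exists>m'. prin_div (rays S) m (fst c) = pair m' (fst c) \<and>
      prin_div (rays S) m (snd c) = pair m' (snd c)" if "c \<in> S" for c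
    using that by (intro exI[of _ m]) (simp add: prin_div_def)
  moreover have "prin_div (rays S) m \<in> TDiv S" by (simp add: TDiv_def prin_div_def)
  ultimately show ?thesis unfolding cartier_def case_prod_unfold by blast
qed

lemma Prin_imp_cartier: "P \<in> Prin (rays S) \<Longrightarrow> cartier S P"
  unfolding Prin_def using cartier_prin_div by blast

lemma Pic_sub_eq: "Pic_sub S = div_class (rays S) ` {E. cartier S E}"
  unfolding Pic_sub_def r_coset_Prin by blast

lemma r_coset_Pic_sub:
  "Pic_sub S #>\<^bsub>Cl_grp S\<^esub> div_class (rays S) D
     = (\<lambda>E. div_class (rays S) (\<lambda>x. E x + D x)) ` {E. cartier S E}"
  unfolding r_coset_def Cl_grp_def mult_FactGroup Pic_sub_eq
  by (auto simp: set_mult_div_class)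

lemma Pic_coset_eq_iff:
  "Pic_sub S #>\<^bsub>Cl_grp S\<^esub> div_class (rays S) D = Pic_sub S #>\<^bsub>Cl_grp S\<^esub> div_class (rays S) D'
     \<longleftrightarrow> cartier S (\<lambda>x. D x - D' x)"
  (is "?C D = ?C D' \<longleftrightarrow> _")
proof
  assume eq: "?C D = ?C D'"
  have "div_class (rays S) D \<in> ?C D"
    unfolding r_coset_Pic_sub using cartier_prin_div[of S 0]
    by (intro image_eqI[of _ _ "\<lambda>x. 0"]) (simp_all add: prin_div_zero)
  then have "div_class (rays S) D \<in> ?C D'" by (simp only: eq)
  then obtain E where E: "cartier S E" "div_class (rays S) D = div_class (rays S) (\<lambda>x. E x + D' x)"
    unfolding r_coset_Pic_sub by auto
  then have "cartier S (\<lambda>x. D x - (E x + D' x))"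
    using Prin_imp_cartier by (simp add: div_class_eq_iff)
  from cartier_add[OF this E(1)] show "cartier S (\<lambda>x. D x - D' x)" by simp
next
  assume c: "cartier S (\<lambda>x. D x - D' x)"
  have "div_class (rays S) (\<lambda>x. E x + D x) \<in> ?C D'" if "cartier S E" for E
    using cartier_add[OF that c] unfolding r_coset_Pic_sub
    by (auto intro!: image_eqI[of _ _ "\<lambda>x. E x + (D x - D' x)"])
  moreover have "div_class (rays S) (\<lambda>x. E x + D' x) \<in> ?C D" if "cartier S E" for E
    using cartier_diff[OF that c] unfolding r_coset_Pic_sub
    by (auto intro!: image_eqI[of _ _ "\<lambda>x. E x - (D x - D' x)"])
  ultimately show "?C D = ?C D'"
    unfolding r_coset_Pic_sub by blast
qed

lemma card_rcosets_Pic_sub: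
  assumes "\<And>D D'. D \<in> TDiv S \<Longrightarrow> D' \<in> TDiv S \<Longrightarrow> f D = f D' \<longleftrightarrow> cartier S (\<lambda>x. D x - D' x)"
  shows "card (rcosets\<^bsub>Cl_grp S\<^esub> Pic_sub S) = card (f ` TDiv S)"
proof -
  have "rcosets\<^bsub>Cl_grp S\<^esub> Pic_sub S = (\<lambda>D. Pic_sub S #>\<^bsub>Cl_grp S\<^esub> div_class (rays S) D) ` TDiv S"
    unfolding RCOSETS_def carrier_Cl_grp by blast
  then show ?thesis
    using assms Pic_coset_eq_iff by (simp add: card_image_eq_if_same_fibres)
qed

context complete_fan
begin

section \<open>The index of Pic in Cl\<close>

lemma ball_cones: "(\<forall>(u, v)\<in>S. P u v) \<longleftrightarrow> (\<forall>i<nrays. P (ray i) (ray (Suc i)))"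
  by (subst cones_eq) auto

lemma ray_in_rays: "ray i \<in> rays S"
  using rays_eq ray_mod[of i] nrays_pos by (metis image_eqI lessThan_iff mod_less_divisor)

definition ray_divisor :: "(nat \<Rightarrow> int) \<Rightarrow> lat \<Rightarrow> int" where
  "ray_divisor f r = (if r \<in> rays S then f (the_inv_into {..<nrays} ray r) else 0)"

lemma ray_divisor_TDiv: "ray_divisor f \<in> TDiv S"
  by (simp add: TDiv_def ray_divisor_def)

lemma ray_divisor_ray: "i < nrays \<Longrightarrow> ray_divisor f (ray i) = f i"
  by (simp add: ray_divisor_def ray_in_rays the_inv_into_f_f[OF inj_on_ray])

lemma TDiv_eqI:
  assumes "D \<in> TDiv S" "D' \<in> TDiv S" "\<And>i. i < nrays \<Longrightarrow> D (ray i) = D' (ray i)"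
  shows "D = D'"
proof
  fix x
  show "D x = D' x"
  proof (cases "x \<in> rays S")
    case True
    then obtain i where "i < nrays" "x = ray i" using rays_eq by auto
    then show ?thesis using assms(3) by simp
  next
    case False
    then show ?thesis using assms(1,2) by (simp add: TDiv_def del: split_paired_All)
  qed
qed

definition cone_det :: "nat \<Rightarrow> int" where
  "cone_det i = det2 (ray i) (ray (Suc i))"

definition cone_twist :: "nat \<Rightarrow> int" where
  "cone_twist i = pair (bezout_vec (ray (Suc i))) (ray i)"

lemma cone_det_pos: "cone_det i > 0"
  by (simp add: cone_det_def det2_ray_pos)

lemma cartier_iff_dvd:
  assumes "D \<in> TDiv S"
  shows "cartier S D \<longleftrightarrow> (\<forall>i<nrays. cone_det i dvd D (ray i) - D (ray (Suc i)) * cone_twist i)"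
  using assms ex_pair_eq_iff_dvd[OF primitive_ray]
  by (simp add: cartier_def ball_cones cone_det_def cone_twist_def)

text \<open>By the local Cartier criterion, the i-th entry of the defect is the class of D in the
  local class group of the i-th cone.\<close>
definition cartier_defect :: "(lat \<Rightarrow> int) \<Rightarrow> nat \<Rightarrow> int" where
  "cartier_defect D =
     restrict (\<lambda>i. (D (ray i) - D (ray (Suc i)) * cone_twist i) mod cone_det i) {..<nrays}"

lemma cartier_defect_eq_iff:
  assumes "D \<in> TDiv S" "D' \<in> TDiv S"
  shows "cartier_defect D = cartier_defect D' \<longleftrightarrow> cartier S (\<lambda>x. D x - D' x)"
proof -
  have "cartier_defect D = cartier_defect D' \<longleftrightarrow> (\<forall>i<nrays.
      (D (ray i) - D (ray (Suc i)) * cone_twist i) mod cone_det i =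
      (D' (ray i) - D' (ray (Suc i)) * cone_twist i) mod cone_det i)"
    unfolding cartier_defect_def by (auto simp: fun_eq_iff restrict_def)
  also have "\<dots> \<longleftrightarrow> (\<forall>i<nrays. cone_det i dvd
      (D (ray i) - D' (ray i)) - (D (ray (Suc i)) - D' (ray (Suc i))) * cone_twist i)"
    by (simp add: mod_eq_dvd_iff algebra_simps)
  also have "\<dots> \<longleftrightarrow> cartier S (\<lambda>x. D x - D' x)"
    using assms by (subst cartier_iff_dvd) (simp_all add: TDiv_def)
  finally show ?thesis .
qed

lemma index_Pic_eq_card_cartier_defect:
  "card (rcosets\<^bsub>Cl_grp S\<^esub> Pic_sub S) = card (cartier_defect ` TDiv S)"
  by (rule card_rcosets_Pic_sub) (simp add: cartier_defect_eq_iff)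

section \<open>The product of the orders of the local class groups\<close>

text \<open>The sum of the annihilators of the rays in the character lattice: rot v spans the
  annihilator of a primitive v.\<close>
definition perp_lattice :: "lat set" where
  "perp_lattice = lattice_span nrays (\<lambda>i. rot (ray i))"

lemma additive_subgroup_perp_lattice: "additive_subgroup perp_lattice"
  unfolding perp_lattice_def by (rule additive_subgroup_lattice_span)

lemma rot_ray_in_perp_lattice: "rot (ray i) \<in> perp_lattice"
  using generator_in_lattice_span[of "i mod nrays" nrays "\<lambda>i. rot (ray i)"] nrays_pos
  unfolding perp_lattice_def by (simp add: ray_mod)

lemma smul_cone_det_in_perp_lattice: "smul (cone_det i) y \<in> perp_lattice"
proof -
  have "smul (cone_det i) y
      = smul (det2 y (rot (ray (Suc i)))) (rot (ray i)) + smul (det2 (rot (ray i)) y) (rot (ray (Suc i)))"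
    using cramer[of "rot (ray i)" "rot (ray (Suc i))" y] by (simp add: cone_det_def)
  then show ?thesis
    by (simp add: additive_subgroup_add additive_subgroup_smul additive_subgroup_perp_lattice
        rot_ray_in_perp_lattice)
qed

definition bezout_sum :: "(nat \<Rightarrow> int) \<Rightarrow> lat" where
  "bezout_sum \<delta> = (\<Sum>i<nrays. smul (\<delta> i) (bezout_vec (ray i)))"

lemma bezout_sum_diff: "bezout_sum (\<lambda>i. \<delta> i - \<delta>' i) = bezout_sum \<delta> - bezout_sum \<delta>'"
  unfolding bezout_sum_def by (simp add: smul_diff_left sum_subtractf)

lemma bezout_sum_in_perp_lattice_iff:
  "bezout_sum \<delta> \<in> perp_lattice \<longleftrightarrow>
     (\<exists>e. (\<forall>i<nrays. pair (e i) (ray i) = \<delta> i) \<and> (\<Sum>i<nrays. e i) = 0)"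
proof
  assume "bezout_sum \<delta> \<in> perp_lattice"
  then obtain k where k: "bezout_sum \<delta> = (\<Sum>i<nrays. smul (k i) (rot (ray i)))"
    unfolding perp_lattice_def mem_lattice_span by blast
  define e where "e i = smul (\<delta> i) (bezout_vec (ray i)) - smul (k i) (rot (ray i))" for i
  have "pair (e i) (ray i) = \<delta> i" for i
    by (simp add: e_def pair_bezout_vec[OF primitive_ray] pair_rot_left)
  moreover have "(\<Sum>i<nrays. e i) = 0"
    unfolding e_def sum_subtractf k[unfolded bezout_sum_def, symmetric] by simp
  ultimately show "\<exists>e. (\<forall>i<nrays. pair (e i) (ray i) = \<delta> i) \<and> (\<Sum>i<nrays. e i) = 0"
    by blast
next
  assume "\<exists>e. (\<forall>i<nrays. pair (e i) (ray i) = \<delta> i) \<and> (\<Sum>i<nrays. e i) = 0"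
  then obtain e where e: "\<And>i. i < nrays \<Longrightarrow> pair (e i) (ray i) = \<delta> i" "(\<Sum>i<nrays. e i) = 0"
    by blast
  define r where "r i = smul (\<delta> i) (bezout_vec (ray i)) - e i" for i
  have "r i \<in> perp_lattice" if "i < nrays" for i
  proof -
    have "pair (r i) (ray i) = 0"
      using e(1)[OF that] by (simp add: r_def pair_bezout_vec[OF primitive_ray])
    then have "r i = smul (det2 (bezout_vec (ray i)) (r i)) (rot (ray i))"
      using primitive_decomp[OF primitive_ray, of "r i" i] by simp
    then show ?thesis
      by (metis additive_subgroup_smul additive_subgroup_perp_lattice rot_ray_in_perp_lattice)
  qed
  moreover have "bezout_sum \<delta> = (\<Sum>i<nrays. r i)"
    unfolding r_def sum_subtractf e(2) bezout_sum_def by simp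
  ultimately show "bezout_sum \<delta> \<in> perp_lattice"
    using additive_subgroup_sum[OF additive_subgroup_perp_lattice, of "{..<nrays}" r] by simp
qed

text \<open>The characters m_i are the partial sums of the lift e.\<close>
lemma local_characters_if_zero_sum_lift:
  assumes e: "\<And>i. i < nrays \<Longrightarrow> pair (e i) (ray i) = \<delta> i" "(\<Sum>i<nrays. e i) = 0"
  shows "\<exists>D\<in>TDiv S. \<forall>i<nrays. \<exists>m. \<delta> i - D (ray i) = pair m (ray i) \<and>
      - D (ray (Suc i)) = pair m (ray (Suc i))"
proof -
  define M where "M k = (\<Sum>j<k. e j)" for k
  define D where "D = ray_divisor (\<lambda>i. - pair (M i) (ray i))"
  have "\<delta> i - D (ray i) = pair (M (Suc i)) (ray i) \<and> - D (ray (Suc i)) = pair (M (Suc i)) (ray (Suc i))"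
    if i: "i < nrays" for i
  proof
    show "\<delta> i - D (ray i) = pair (M (Suc i)) (ray i)"
      using e(1)[OF i] by (simp add: D_def M_def ray_divisor_ray[OF i])
    show "- D (ray (Suc i)) = pair (M (Suc i)) (ray (Suc i))"
    proof (cases "Suc i < nrays")
      case True
      then show ?thesis by (simp add: D_def ray_divisor_ray)
    next
      case False
      then have "Suc i = nrays" using i by simp
      then show ?thesis
        using e(2) nrays_pos by (simp add: D_def M_def ray_nrays ray_divisor_ray)
    qed
  qed
  moreover have "D \<in> TDiv S" unfolding D_def by (rule ray_divisor_TDiv)
  ultimately show ?thesis by blast
qed

lemma zero_sum_lift_if_local_characters:
  assumes "\<forall>i<nrays. \<exists>m. \<delta> i - D (ray i) = pair m (ray i) \<and> - D (ray (Suc i)) = pair m (ray (Suc i))"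
  shows "\<exists>e. (\<forall>i<nrays. pair (e i) (ray i) = \<delta> i) \<and> (\<Sum>i<nrays. e i) = 0"
proof -
  have "\<forall>i. \<exists>m. i < nrays \<longrightarrow>
      \<delta> i - D (ray i) = pair m (ray i) \<and> - D (ray (Suc i)) = pair m (ray (Suc i))"
    using assms by blast
  from choice[OF this] obtain m where m: "\<And>i. i < nrays \<Longrightarrow>
      \<delta> i - D (ray i) = pair (m i) (ray i) \<and> - D (ray (Suc i)) = pair (m i) (ray (Suc i))"
    by blast
  define prev where "prev i = (if i = 0 then nrays - 1 else i - 1)" for i
  have m_prev: "pair (m (prev i)) (ray i) = - D (ray i)" if "i < nrays" for i
  proof (cases i)
    case 0
    then show ?thesis using m[of "nrays - 1"] nrays_pos by (simp add: prev_def ray_nrays)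
  next
    case (Suc j)
    then show ?thesis using m[of j] that by (simp add: prev_def)
  qed
  define e where "e i = m i - m (prev i)" for i
  have "pair (e i) (ray i) = \<delta> i" if "i < nrays" for i
    using m[OF that] m_prev[OF that] by (simp add: e_def)
  moreover have "(\<Sum>i<nrays. e i) = 0"
  proof -
    obtain k where k: "nrays = Suc k" using nrays_pos by (cases nrays) auto
    have "(\<Sum>i<nrays. m (prev i)) = m k + (\<Sum>i<k. m i)"
      unfolding k sum.lessThan_Suc_shift by (simp add: prev_def k)
    also have "\<dots> = (\<Sum>i<nrays. m i)" by (simp add: k)
    finally show ?thesis by (simp add: e_def sum_subtractf)
  qed
  ultimately show ?thesis by blast
qed

lemma bezout_sum_in_perp_lattice_iff_dvd:
  "bezout_sum \<delta> \<in> perp_lattice \<longleftrightarrow>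
     (\<exists>D\<in>TDiv S. \<forall>i<nrays. cone_det i dvd \<delta> i - (D (ray i) - D (ray (Suc i)) * cone_twist i))"
proof -
  have "(\<exists>m. \<delta> i - D (ray i) = pair m (ray i) \<and> - D (ray (Suc i)) = pair m (ray (Suc i))) \<longleftrightarrow>
      cone_det i dvd \<delta> i - (D (ray i) - D (ray (Suc i)) * cone_twist i)" for D i
    using ex_pair_eq_iff_dvd[OF primitive_ray[of "Suc i"], of "\<delta> i - D (ray i)" "ray i"]
    by (simp add: cone_det_def cone_twist_def algebra_simps)
  moreover have "(\<exists>e. (\<forall>i<nrays. pair (e i) (ray i) = \<delta> i) \<and> (\<Sum>i<nrays. e i) = 0) \<longleftrightarrow>
      (\<exists>D\<in>TDiv S. \<forall>i<nrays. \<exists>m. \<delta> i - D (ray i) = pair m (ray i) \<and>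
        - D (ray (Suc i)) = pair m (ray (Suc i)))"
    using local_characters_if_zero_sum_lift zero_sum_lift_if_local_characters by blast
  ultimately show ?thesis unfolding bezout_sum_in_perp_lattice_iff by simp
qed

definition defect_box :: "(nat \<Rightarrow> int) set" where
  "defect_box = PiE {..<nrays} (\<lambda>i. {0..<cone_det i})"

definition shift_defect :: "(nat \<Rightarrow> int) \<Rightarrow> (nat \<Rightarrow> int) \<Rightarrow> nat \<Rightarrow> int" where
  "shift_defect \<xi> \<psi> = restrict (\<lambda>i. (\<xi> i + \<psi> i) mod cone_det i) {..<nrays}"

lemma cartier_defect_in_box: "cartier_defect D \<in> defect_box"
  and shift_defect_in_box: "shift_defect \<xi> \<psi> \<in> defect_box"
  using cone_det_pos by (auto simp: defect_box_def cartier_defect_def shift_defect_def)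

lemma eq_mod_iff_dvd_diff:
  fixes x y d :: int
  assumes "x mod d = x"
  shows "x = y mod d \<longleftrightarrow> d dvd x - y"
proof -
  have "x = y mod d \<longleftrightarrow> x mod d = y mod d" using assms by (metis mod_mod_trivial)
  then show ?thesis by (simp add: mod_eq_dvd_iff)
qed

lemma defect_box_eqI:
  assumes "\<xi> \<in> defect_box" "\<xi>' \<in> defect_box" and dvd: "\<And>i. i < nrays \<Longrightarrow> cone_det i dvd \<xi> i - \<xi>' i"
  shows "\<xi> = \<xi>'"
  using assms(1,2) unfolding defect_box_def
proof (rule PiE_ext)
  fix i assume i: "i \<in> {..<nrays}"
  then have "\<xi> i mod cone_det i = \<xi> i" "\<xi>' i mod cone_det i = \<xi>' i"
    using assms(1,2) by (auto simp: defect_box_def PiE_iff)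
  moreover have "\<xi> i mod cone_det i = \<xi>' i mod cone_det i"
    using dvd i by (simp add: mod_eq_dvd_iff)
  ultimately show "\<xi> i = \<xi>' i" by metis
qed

lemma inj_on_shift_defect: "inj_on (shift_defect \<xi>) defect_box"
proof (rule inj_onI)
  fix \<psi> \<psi>' assume "\<psi> \<in> defect_box" "\<psi>' \<in> defect_box" "shift_defect \<xi> \<psi> = shift_defect \<xi> \<psi>'"
  moreover have "cone_det i dvd \<psi> i - \<psi>' i"
    if "shift_defect \<xi> \<psi> i = shift_defect \<xi> \<psi>' i" "i < nrays" for i
    using that by (simp add: shift_defect_def mod_eq_dvd_iff)
  ultimately show "\<psi> = \<psi>'" using defect_box_eqI by metis
qed

lemma shift_defect_eq_iff:
  assumes "\<xi> \<in> defect_box"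
  shows "\<xi> = shift_defect \<xi>' \<psi> \<longleftrightarrow> (\<forall>i<nrays. \<xi> i = (\<xi>' i + \<psi> i) mod cone_det i)"
proof
  assume "\<xi> = shift_defect \<xi>' \<psi>"
  then show "\<forall>i<nrays. \<xi> i = (\<xi>' i + \<psi> i) mod cone_det i" by (simp add: shift_defect_def)
next
  assume h: "\<forall>i<nrays. \<xi> i = (\<xi>' i + \<psi> i) mod cone_det i"
  show "\<xi> = shift_defect \<xi>' \<psi>"
    using assms shift_defect_in_box[of \<xi>' \<psi>] unfolding defect_box_def
  proof (rule PiE_ext)
    fix i assume "i \<in> {..<nrays}"
    then show "\<xi> i = shift_defect \<xi>' \<psi> i" using h by (simp add: shift_defect_def)
  qed
qed

lemma coset_bezout_sum_eq_iff:
  assumes "\<xi> \<in> defect_box"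
  shows "{y. bezout_sum \<xi> - y \<in> perp_lattice} = {y. bezout_sum \<xi>' - y \<in> perp_lattice} \<longleftrightarrow>
    (\<exists>D\<in>TDiv S. \<xi> = shift_defect \<xi>' (cartier_defect D))"
proof -
  have "\<xi> = shift_defect \<xi>' (cartier_defect D) \<longleftrightarrow>
      (\<forall>i<nrays. cone_det i dvd (\<xi> i - \<xi>' i) - (D (ray i) - D (ray (Suc i)) * cone_twist i))" for D
  proof -
    have "\<xi> i = (\<xi>' i + cartier_defect D i) mod cone_det i \<longleftrightarrow>
        cone_det i dvd (\<xi> i - \<xi>' i) - (D (ray i) - D (ray (Suc i)) * cone_twist i)"
      if "i < nrays" for i
    proof -
      have box: "\<xi> i mod cone_det i = \<xi> i" using assms that by (simp add: defect_box_def PiE_iff)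
      have "\<xi> i = (\<xi>' i + cartier_defect D i) mod cone_det i \<longleftrightarrow>
          \<xi> i = (\<xi>' i + (D (ray i) - D (ray (Suc i)) * cone_twist i)) mod cone_det i"
        using that by (simp add: cartier_defect_def mod_add_right_eq)
      also have "\<dots> \<longleftrightarrow> cone_det i dvd \<xi> i - (\<xi>' i + (D (ray i) - D (ray (Suc i)) * cone_twist i))"
        by (rule eq_mod_iff_dvd_diff[OF box])
      finally show ?thesis by (simp add: diff_diff_eq)
    qed
    then show ?thesis by (simp add: shift_defect_eq_iff[OF assms])
  qed
  then show ?thesis
    by (simp add: coset_eq_iff[OF additive_subgroup_perp_lattice] bezout_sum_diff[symmetric]
        bezout_sum_in_perp_lattice_iff_dvd)
qed

lemma coset_bezout_sum_surj:
  "(\<lambda>\<xi>. {y. bezout_sum \<xi> - y \<in> perp_lattice}) ` defect_box = range (\<lambda>x. {y. x - y \<in> perp_lattice})"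
proof -
  have "{y. m - y \<in> perp_lattice} \<in> (\<lambda>\<xi>. {y. bezout_sum \<xi> - y \<in> perp_lattice}) ` defect_box" for m
  proof -
    let ?w = "bezout_vec (ray 0)"
    define r where "r = pair m (ray 0) mod cone_det 0"
    define \<xi> where "\<xi> = restrict (\<lambda>i. if i = 0 then r else 0) {..<nrays}"
    have \<xi>: "\<xi> \<in> defect_box"
      using cone_det_pos by (auto simp: \<xi>_def r_def defect_box_def)
    have "bezout_sum \<xi> = (\<Sum>i<nrays. if i = 0 then smul r ?w else 0)"
      unfolding bezout_sum_def by (rule sum.cong) (auto simp: \<xi>_def)
    also have "\<dots> = smul r ?w" using nrays_pos by simp
    finally have "bezout_sum \<xi> = smul r ?w" .
    moreover obtain q where "r - pair m (ray 0) = cone_det 0 * q"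
      unfolding r_def by (metis dvd_def mod_mod_trivial mod_eq_dvd_iff)
    ultimately have "bezout_sum \<xi> - m
        = smul (cone_det 0) (smul q ?w) - (m - smul (pair m (ray 0)) ?w)"
      by (simp add: smul_smul prod_eq_iff algebra_simps)
    also have "\<dots> = smul (cone_det 0) (smul q ?w) - smul (det2 ?w m) (rot (ray 0))"
      using primitive_decomp[OF primitive_ray, of m 0] by (simp add: algebra_simps)
    also have "\<dots> \<in> perp_lattice"
      by (intro additive_subgroup_diff[OF additive_subgroup_perp_lattice]
          additive_subgroup_smul[OF additive_subgroup_perp_lattice]
          smul_cone_det_in_perp_lattice rot_ray_in_perp_lattice)
    finally have "{y. bezout_sum \<xi> - y \<in> perp_lattice} = {y. m - y \<in> perp_lattice}"
      by (simp add: coset_eq_iff[OF additive_subgroup_perp_lattice])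
    then show ?thesis by (rule image_eqI[OF sym \<xi>])
  qed
  then show ?thesis by blast
qed

theorem prod_cone_det:
  "(\<Prod>i<nrays. nat (cone_det i)) = lattice_index perp_lattice * card (cartier_defect ` TDiv S)"
proof -
  let ?F = "\<lambda>\<xi>. {y. bezout_sum \<xi> - y \<in> perp_lattice}"
  have "card {\<xi> \<in> defect_box. ?F \<xi> = ?F \<xi>'} = card (cartier_defect ` TDiv S)"
    if "\<xi>' \<in> defect_box" for \<xi>'
  proof -
    have "{\<xi> \<in> defect_box. ?F \<xi> = ?F \<xi>'} = shift_defect \<xi>' ` cartier_defect ` TDiv S"
      using coset_bezout_sum_eq_iff shift_defect_in_box by auto
    moreover have "inj_on (shift_defect \<xi>') (cartier_defect ` TDiv S)"
      using inj_on_shift_defect cartier_defect_in_box by (blast intro: inj_on_subset)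
    ultimately show ?thesis by (simp add: card_image)
  qed
  moreover have "finite defect_box" unfolding defect_box_def by (rule finite_PiE) auto
  ultimately have "card defect_box = card (?F ` defect_box) * card (cartier_defect ` TDiv S)"
    by (intro card_eq_card_image_mult_fibres) simp_all
  moreover have "card defect_box = (\<Prod>i<nrays. nat (cone_det i))"
    by (simp add: defect_box_def card_PiE)
  moreover have "card (?F ` defect_box) = lattice_index perp_lattice"
    unfolding coset_bezout_sum_surj lattice_index_def ..
  ultimately show ?thesis by simp
qed

definition ray_lattice :: "lat set" where
  "ray_lattice = lattice_span nrays ray"

lemma ray_in_ray_lattice: "ray i \<in> ray_lattice"
  using generator_in_lattice_span[of "i mod nrays" nrays ray] nrays_pos
  unfolding ray_lattice_def by (simp add: ray_mod)

lemma ray_lattice_hnf: "\<exists>a b c. a > 0 \<and> c > 0 \<and> ray_lattice = span2 (a, 0) (b, c)"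
  using additive_subgroup_hnf[OF _ ray_in_ray_lattice ray_in_ray_lattice, of 0 "Suc 0"]
    det2_ray_pos[of 0] additive_subgroup_lattice_span
  unfolding ray_lattice_def by simp

definition ray_coeffs :: "lat \<Rightarrow> nat \<Rightarrow> int" where
  "ray_coeffs v = (SOME k. v = (\<Sum>i<nrays. smul (k i) (ray i)))"

lemma ray_coeffs:
  assumes "v \<in> ray_lattice"
  shows "v = (\<Sum>i<nrays. smul (ray_coeffs v i) (ray i))"
proof -
  have "\<exists>k. v = (\<Sum>i<nrays. smul (k i) (ray i))"
    using assms unfolding ray_lattice_def mem_lattice_span .
  from someI_ex[OF this] show ?thesis unfolding ray_coeffs_def .
qed

lemma perp_lattice_eq_rot: "perp_lattice = rot ` ray_lattice"
  unfolding perp_lattice_def ray_lattice_def by (rule lattice_span_rot)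

lemma prod_card_local_Cl_grp:
  "(\<Prod>c\<in>S. card (carrier (local_Cl_grp c))) = (\<Prod>i<nrays. nat (cone_det i))"
proof -
  have "inj_on (\<lambda>i. (ray i, ray (Suc i))) {..<nrays}"
    using inj_on_ray by (auto simp: inj_on_def)
  then have "(\<Prod>c\<in>S. card (carrier (local_Cl_grp c)))
      = (\<Prod>i<nrays. card (carrier (local_Cl_grp (ray i, ray (Suc i)))))"
    by (subst cones_eq) (simp add: prod.reindex)
  also have "\<dots> = (\<Prod>i<nrays. nat (cone_det i))"
    by (simp add: card_local_Cl_grp primitive_ray det2_ray_pos cone_det_def)
  finally show ?thesis .
qed

end

section \<open>Torsion of the class group\<close>

definition torsion_divisors :: "(lat \<times> lat) set \<Rightarrow> (lat \<Rightarrow> int) set" where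
  "torsion_divisors S = {D \<in> TDiv S. \<exists>k::nat. k > 0 \<and> (\<lambda>x. int k * D x) \<in> Prin (rays S)}"

lemma Cl_tors_eq: "Cl_tors S = div_class (rays S) ` torsion_divisors S"
proof -
  have "div_class (rays S) D [^]\<^bsub>Cl_grp S\<^esub> k = \<one>\<^bsub>Cl_grp S\<^esub> \<longleftrightarrow> (\<lambda>x. int k * D x) \<in> Prin (rays S)"
    for D and k :: nat
    by (simp add: pow_Cl_grp one_Cl_grp div_class_eq_iff)
  then show ?thesis
    unfolding Cl_tors_def carrier_Cl_grp torsion_divisors_def by blast
qed

lemma torsion_divisors_diff:
  assumes "D \<in> torsion_divisors S" "D' \<in> torsion_divisors S"
  shows "(\<lambda>x. D x - D' x) \<in> torsion_divisors S"
proof -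
  obtain k k' :: nat where "k > 0" "k' > 0"
    and kD: "(\<lambda>x. int k * D x) \<in> Prin (rays S)" and kD': "(\<lambda>x. int k' * D' x) \<in> Prin (rays S)"
    using assms unfolding torsion_divisors_def by blast
  have "(\<lambda>x. int k' * (int k * D x) - int k * (int k' * D' x)) \<in> Prin (rays S)"
    using Prin_diff[OF Prin_scale[OF kD, of "int k'"] Prin_scale[OF kD', of "int k"]] .
  moreover have "(\<lambda>x. int k' * (int k * D x) - int k * (int k' * D' x))
      = (\<lambda>x. int (k * k') * (D x - D' x))"
    by (simp add: fun_eq_iff algebra_simps)
  ultimately have "(\<lambda>x. int (k * k') * (D x - D' x)) \<in> Prin (rays S)" by simp
  moreover have "k * k' > 0" using \<open>k > 0\<close> \<open>k' > 0\<close> by simp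
  moreover have "(\<lambda>x. D x - D' x) \<in> TDiv S"
    using assms by (simp add: torsion_divisors_def TDiv_def)
  ultimately show ?thesis unfolding torsion_divisors_def by blast
qed

locale complete_fan_hnf = complete_fan +
  fixes a b c :: int
  assumes a_pos: "a > 0" and c_pos: "c > 0" and ray_lattice_eq: "ray_lattice = span2 (a, 0) (b, c)"
begin

lemma lattice_index_perp_lattice: "lattice_index perp_lattice = nat (a * c)"
proof -
  have "perp_lattice = span2 (rot (a, 0)) (rot (b, c))"
    by (simp add: perp_lattice_eq_rot ray_lattice_eq span2_rot)
  moreover have "det2 (rot (a, 0)) (rot (b, c)) = a * c" by (simp add: det2_def)
  ultimately show ?thesis using a_pos c_pos by (simp add: lattice_index_span2)
qed

text \<open>If k D = div(\<chi>^m), then hnf_values D records the values of the rational character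
  m / k on the basis (a, 0), (b, c) of the ray lattice.\<close>
definition hnf_values :: "(lat \<Rightarrow> int) \<Rightarrow> lat" where
  "hnf_values D = ((\<Sum>i<nrays. ray_coeffs (a, 0) i * D (ray i)),
                   (\<Sum>i<nrays. ray_coeffs (b, c) i * D (ray i)))"

lemma hnf_values_diff: "hnf_values (\<lambda>x. D x - D' x) = hnf_values D - hnf_values D'"
  and hnf_values_scale: "hnf_values (\<lambda>x. k * D x) = smul k (hnf_values D)"
  by (simp_all add: hnf_values_def smul_def right_diff_distrib sum_subtractf sum_distrib_left
      algebra_simps)

lemma hnf_values_pair:
  assumes "\<And>i. i < nrays \<Longrightarrow> D (ray i) = pair m (ray i)"
  shows "hnf_values D = (pair m (a, 0), pair m (b, c))"
proof -
  have "(\<Sum>i<nrays. ray_coeffs v i * D (ray i)) = pair m v" if "v \<in> ray_lattice" for v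
    using assms by (subst (2) ray_coeffs[OF that]) (simp add: pair_sum_right pair_smul_right)
  then show ?thesis
    unfolding hnf_values_def ray_lattice_eq using span2_base by simp
qed

lemma hnf_values_prin_div: "hnf_values (prin_div (rays S) m) = (pair m (a, 0), pair m (b, c))"
  by (rule hnf_values_pair) (simp add: prin_div_def ray_in_rays)

definition char_lattice :: "lat set" where
  "char_lattice = {(pair m (a, 0), pair m (b, c)) | m. True}"

lemma char_lattice_eq: "char_lattice = span2 (a, b) (0, c)"
proof -
  have comb: "(pair (i, j) (a, 0), pair (i, j) (b, c)) = smul i (a, b) + smul j (0, c)" for i j
    by (simp add: pair_def prod_eq_iff algebra_simps)
  show ?thesis
  proof (intro equalityI subsetI)
    fix x assume "x \<in> char_lattice"
    then obtain i j where "x = (pair (i, j) (a, 0), pair (i, j) (b, c))"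
      unfolding char_lattice_def by auto
    then show "x \<in> span2 (a, b) (0, c)" unfolding comb mem_span2 by blast
  next
    fix x assume "x \<in> span2 (a, b) (0, c)"
    then obtain i j where "x = smul i (a, b) + smul j (0, c)" unfolding mem_span2 by blast
    then show "x \<in> char_lattice" unfolding comb[symmetric] char_lattice_def by blast
  qed
qed

lemma lattice_index_char_lattice: "lattice_index char_lattice = nat (a * c)"
  using a_pos c_pos by (simp add: char_lattice_eq lattice_index_span2 det2_def)

lemma torsion_hnf_values_eq_zero:
  assumes D: "D \<in> torsion_divisors S" and zero: "hnf_values D = 0"
  shows "D = (\<lambda>x. 0)"
proof -
  obtain k :: nat and m where k: "k > 0" and kD: "(\<lambda>x. int k * D x) = prin_div (rays S) m"
    using D unfolding torsion_divisors_def Prin_def by blast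
  have "(pair m (a, 0), pair m (b, c)) = smul (int k) (hnf_values D)"
    by (simp flip: kD hnf_values_prin_div add: hnf_values_scale)
  then have "pair m (a, 0) = 0" "pair m (b, c) = 0" using zero by (simp_all add: smul_def zero_prod_def)
  then have "m = 0" using a_pos c_pos by (simp add: pair_def prod_eq_iff)
  then have "int k * D x = 0" for x using fun_cong[OF kD, of x] by (simp add: prin_div_def)
  then show ?thesis using k by auto
qed

lemma torsion_class_eq_iff:
  assumes "D \<in> torsion_divisors S" "D' \<in> torsion_divisors S"
  shows "div_class (rays S) D = div_class (rays S) D' \<longleftrightarrow> hnf_values D - hnf_values D' \<in> char_lattice"
proof
  assume "div_class (rays S) D = div_class (rays S) D'"
  then obtain m where "(\<lambda>x. D x - D' x) = prin_div (rays S) m"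
    unfolding div_class_eq_iff Prin_def by blast
  then have "hnf_values D - hnf_values D' = (pair m (a, 0), pair m (b, c))"
    by (simp flip: hnf_values_diff hnf_values_prin_div)
  then show "hnf_values D - hnf_values D' \<in> char_lattice"
    unfolding char_lattice_def by blast
next
  assume "hnf_values D - hnf_values D' \<in> char_lattice"
  then obtain m where m: "hnf_values D - hnf_values D' = (pair m (a, 0), pair m (b, c))"
    unfolding char_lattice_def by blast
  define E where "E x = (D x - D' x) - prin_div (rays S) m x" for x
  have "prin_div (rays S) m \<in> torsion_divisors S"
    unfolding torsion_divisors_def TDiv_def Prin_def
    by (auto simp: prin_div_def intro: exI[of _ 1])
  then have "E \<in> torsion_divisors S"
    unfolding E_def by (intro torsion_divisors_diff assms)
  moreover have "hnf_values E = 0"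
    unfolding E_def hnf_values_diff hnf_values_prin_div m by simp
  ultimately have "E = (\<lambda>x. 0)" by (rule torsion_hnf_values_eq_zero)
  then have "(\<lambda>x. D x - D' x) = prin_div (rays S) m"
    by (simp add: E_def fun_eq_iff)
  then show "div_class (rays S) D = div_class (rays S) D'"
    unfolding div_class_eq_iff Prin_def by simp
qed

lemma hnf_values_surj: "hnf_values ` torsion_divisors S = UNIV"
proof -
  have "(p, q) \<in> hnf_values ` torsion_divisors S" for p q
  proof -
    define g where "g = a * c"
    have g: "g > 0" using a_pos c_pos by (simp add: g_def)
    define m where "m = (p * c, q * a - p * b)"
    have "g dvd pair m v" if v: "v \<in> ray_lattice" for v
    proof -
      obtain s t where "v = smul s (a, 0) + smul t (b, c)"
        using v unfolding ray_lattice_eq mem_span2 by blast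
      then have "pair m v = g * (s * p + t * q)" by (simp add: m_def g_def pair_def algebra_simps)
      then show ?thesis by simp
    qed
    then have dvd: "g dvd pair m (ray i)" for i using ray_in_ray_lattice by blast
    define D where "D = ray_divisor (\<lambda>i. pair m (ray i) div g)"
    have gD: "(\<lambda>x. g * D x) = prin_div (rays S) m"
    proof (rule TDiv_eqI)
      show "(\<lambda>x. g * D x) \<in> TDiv S" "prin_div (rays S) m \<in> TDiv S"
        using ray_divisor_TDiv[of "\<lambda>i. pair m (ray i) div g"]
        by (simp_all add: D_def TDiv_def prin_div_def)
      show "g * D (ray i) = prin_div (rays S) m (ray i)" if "i < nrays" for i
        using dvd[of i] that by (simp add: D_def ray_divisor_ray prin_div_def ray_in_rays)
    qed
    have "D \<in> torsion_divisors S"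
      unfolding torsion_divisors_def Prin_def
      using ray_divisor_TDiv g gD by (auto simp: D_def intro!: exI[of _ "nat g"])
    moreover have "smul g (hnf_values D) = smul g (p, q)"
      using hnf_values_prin_div[of m] unfolding hnf_values_scale[symmetric] gD
      by (simp add: m_def g_def pair_def smul_def algebra_simps)
    then have "hnf_values D = (p, q)" using g by (simp add: smul_def prod_eq_iff)
    ultimately show ?thesis by (metis image_eqI)
  qed
  then show ?thesis by auto
qed

theorem card_Cl_tors: "card (Cl_tors S) = nat (a * c)"
proof -
  have "card (Cl_tors S) = card ((\<lambda>D. {y. hnf_values D - y \<in> char_lattice}) ` torsion_divisors S)"
    unfolding Cl_tors_eq using torsion_class_eq_iff additive_subgroup_span2
    by (intro card_image_eq_if_same_fibres) (simp add: coset_eq_iff char_lattice_eq)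
  also have "(\<lambda>D. {y. hnf_values D - y \<in> char_lattice}) ` torsion_divisors S
      = (\<lambda>x. {y. x - y \<in> char_lattice}) ` hnf_values ` torsion_divisors S"
    by (simp add: image_image)
  finally show ?thesis
    by (simp add: hnf_values_surj lattice_index_char_lattice flip: lattice_index_def)
qed

end

theorem corollary7p3:
  fixes S :: "(lat \<times> lat) set"
  assumes "complete_fan2 S" and "projective_fan2 S"
  shows "real (card (rcosets\<^bsub>Cl_grp S\<^esub> (Pic_sub S)))
       = (1 / real (card (Cl_tors S))) * (\<Prod>c\<in>S. real (card (carrier (local_Cl_grp c))))"
proof -
  interpret complete_fan S by unfold_locales (rule assms(1))
  obtain a b c where "a > 0" "c > 0" "ray_lattice = span2 (a, 0) (b, c)"
    using ray_lattice_hnf by blast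
  then interpret complete_fan_hnf S a b c by unfold_locales
  define N where "N = nat (a * c)"
  have "(\<Prod>c\<in>S. card (carrier (local_Cl_grp c))) = N * card (rcosets\<^bsub>Cl_grp S\<^esub> (Pic_sub S))"
    by (simp add: N_def prod_card_local_Cl_grp prod_cone_det lattice_index_perp_lattice
        index_Pic_eq_card_cartier_defect)
  moreover have "card (Cl_tors S) = N" unfolding N_def by (rule card_Cl_tors)
  moreover have "N > 0" using \<open>a > 0\<close> \<open>c > 0\<close> by (simp add: N_def)
  ultimately show ?thesis by (simp flip: of_nat_prod)
qed

end
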